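(* Let $n\geq 2$ and let $\Lambda=(\lambda_1,\ldots,\lambda_n)$ be complex numbers with $0<|\lambda_n|\leq\cdots\leq|\lambda_1|<1$. Then the primary Hopf manifold $M_\Lambda$ of type $\Lambda$ supports a l.c.K. metric (Hermitian with respect to its complex structure) with parallel Lee form.
   Context: The primary Hopf manifold $M_\Lambda$ of type $\Lambda$ is the compact complex manifold $(\mathbb{C}^n\setminus\{0\})/\Gamma_\Lambda$, where $\Gamma_\Lambda$ is the infinite cyclic group generated by $(z_1,\ldots,z_n)\mapsto(\lambda_1z_1,\ldots,\lambda_nz_n)$, with complex structure induced from $\mathbb{C}^n$. A Hermitian metric $g$ with fundamental form $\omega(X,Y)=g(X,JY)$ is l.c.K. if $d\omega=\theta\wedge\omega$ for a closed $1$-form $\theta$ (the Lee form); the Lee form is parallel if $\nabla^g\theta=0$. *)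

theory Defs
  imports "HOL-Analysis.Analysis"
begin

text \<open>Tensor fields on the open set C^n - {0} are written with respect to constant
  vector fields; a tensor field on the Hopf manifold is the same as a tensor field
  on C^n - {0} invariant under the generator of Gamma.\<close>

fun dd :: "('v::real_normed_vector \<Rightarrow> real) \<Rightarrow> 'v list \<Rightarrow> 'v \<Rightarrow> real" where
  "dd f [] = f"
| "dd f (v # vs) = (\<lambda>p. frechet_derivative (dd f vs) (at p) v)"

definition smooth_on :: "'v::real_normed_vector set \<Rightarrow> ('v \<Rightarrow> real) \<Rightarrow> bool" where
  "smooth_on U f \<longleftrightarrow> (\<forall>vs. continuous_on U (dd f vs) \<and> (\<forall>p\<in>U. dd f vs differentiable (at p)))"

definition D :: "('v::real_normed_vector \<Rightarrow> real) \<Rightarrow> 'v \<Rightarrow> 'v \<Rightarrow> real" where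
  "D f p X = frechet_derivative f (at p) X"

definition Jc :: "complex^'n \<Rightarrow> complex^'n" where
  "Jc v = (\<chi> i. \<i> * v $ i)"

definition hopf_gen :: "complex^'n \<Rightarrow> complex^'n \<Rightarrow> complex^'n" where
  "hopf_gen lam z = (\<chi> i. lam $ i * z $ i)"

definition punctured :: "(complex^'n) set" where
  "punctured = - {0}"

definition hermitian_metric_hopf ::
  "complex^'n \<Rightarrow> (complex^'n \<Rightarrow> complex^'n \<Rightarrow> complex^'n \<Rightarrow> real) \<Rightarrow> bool" where
  "hermitian_metric_hopf lam g \<longleftrightarrow>
     (\<forall>p\<in>punctured. bilinear (g p) \<and> (\<forall>v w. g p v w = g p w v) \<and> (\<forall>v. v \<noteq> 0 \<longrightarrow> g p v v > 0)
        \<and> (\<forall>v w. g p (Jc v) (Jc w) = g p v w)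
        \<and> (\<forall>v w. g (hopf_gen lam p) (hopf_gen lam v) (hopf_gen lam w) = g p v w))
   \<and> (\<forall>v w. smooth_on punctured (\<lambda>p. g p v w))"

definition one_form_hopf ::
  "complex^'n \<Rightarrow> (complex^'n \<Rightarrow> complex^'n \<Rightarrow> real) \<Rightarrow> bool" where
  "one_form_hopf lam \<theta> \<longleftrightarrow>
     (\<forall>p\<in>punctured. linear (\<theta> p) \<and> (\<forall>v. \<theta> (hopf_gen lam p) (hopf_gen lam v) = \<theta> p v))
   \<and> (\<forall>v. smooth_on punctured (\<lambda>p. \<theta> p v))"

definition fund_form :: "(complex^'n \<Rightarrow> complex^'n \<Rightarrow> complex^'n \<Rightarrow> real) \<Rightarrow> complex^'n \<Rightarrow> complex^'n \<Rightarrow> complex^'n \<Rightarrow> real" where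
  "fund_form g p X Y = g p X (Jc Y)"

definition closed_form where
  "closed_form \<theta> \<longleftrightarrow> (\<forall>p\<in>punctured. \<forall>X Y. D (\<lambda>q. \<theta> q Y) p X - D (\<lambda>q. \<theta> q X) p Y = 0)"

text \<open>d omega = theta wedge omega, evaluated on constant vector fields X Y Z.\<close>
definition lck_equation where
  "lck_equation g \<theta> \<longleftrightarrow> (\<forall>p\<in>punctured. \<forall>X Y Z.
      D (\<lambda>q. fund_form g q Y Z) p X - D (\<lambda>q. fund_form g q X Z) p Y + D (\<lambda>q. fund_form g q X Y) p Z
    = \<theta> p X * fund_form g p Y Z - \<theta> p Y * fund_form g p X Z + \<theta> p Z * fund_form g p X Y)"

text \<open>Levi-Civita connection on constant fields via the Koszul formula:
  N is nabla_X Y at p iff 2 g(N,Z) = X g(Y,Z) + Y g(X,Z) - Z g(X,Y) for all Z.\<close>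
definition levi_civita_at where
  "levi_civita_at g p X Y N \<longleftrightarrow> (\<forall>Z. 2 * g p N Z =
      D (\<lambda>q. g q Y Z) p X + D (\<lambda>q. g q X Z) p Y - D (\<lambda>q. g q X Y) p Z)"

definition parallel_form where
  "parallel_form g \<theta> \<longleftrightarrow> (\<forall>p\<in>punctured. \<forall>X Y N. levi_civita_at g p X Y N \<longrightarrow>
      D (\<lambda>q. \<theta> q Y) p X - \<theta> p N = 0)"

definition lck_metric_parallel_lee_on_hopf :: "complex^'n \<Rightarrow> bool" where
  "lck_metric_parallel_lee_on_hopf lam \<longleftrightarrow>
     (\<exists>g \<theta>. hermitian_metric_hopf lam g \<and> one_form_hopf lam \<theta> \<and> closed_form \<theta>
        \<and> lck_equation g \<theta> \<and> parallel_form g \<theta>)"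

end

(*
  Put a_j = -ln |lambda_j| > 0 and let phi(z) > 0 be the solution of
  sum_j |z_j|^2 phi(z)^(-a_j) = 1.  Then phi(c_1 z_1, ..., c_n z_n) = r^2 phi(z) whenever
  |c_j| = r^(a_j): phi is smooth (implicit function theorem), phi(lambda z) = e^(-2) phi(z),
  phi is invariant under the rotations z_j -> e^(i a_j t) z_j and multiplied by e^(2t) under the
  weighted dilations z_j -> e^(a_j t) z_j, whose generator we call A.

  A direct computation shows that phi is strictly plurisubharmonic, so
  g = (D^2 phi + D^2 phi(J., J.)) / phi is a Gamma-invariant Hermitian metric.  Its fundamental
  form is the exact Kaehler form dd^c phi divided by phi, hence d omega = theta /\ omega with the
  exact Lee form theta = -d phi / phi.  Both flows preserve g, so A is a Killing field; the Euler
  identity for phi gives g(., A) = -2 theta, and a closed 1-form dual to a Killing field is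
  parallel.
*)
theory Submission
  imports Defs
begin

lemma dd_append: "dd f (ws @ vs) = dd (dd f vs) ws"
  by (induction ws) auto

lemma frechet_derivative_cong_open:
  assumes "open U" "x \<in> U" "\<And>y. y \<in> U \<Longrightarrow> f y = g y"
  shows "frechet_derivative f (at x) = frechet_derivative g (at x)"
proof -
  have "(f has_derivative f') (at x) \<longleftrightarrow> (g has_derivative f') (at x)" for f'
    using has_derivative_transform_within_open[OF _ assms(1,2)] assms(3) by metis
  then show ?thesis unfolding frechet_derivative_def by simp
qed

lemma smooth_on_dd: "smooth_on U f \<Longrightarrow> smooth_on U (dd f vs)"
  unfolding smooth_on_def by (simp add: dd_append[symmetric])

lemma smooth_on_has_derivative_dd:
  assumes "smooth_on U f" "p \<in> U"
  shows "(dd f vs has_derivative (\<lambda>X. dd f (X # vs) p)) (at p)"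
  using assms frechet_derivative_works unfolding smooth_on_def by fastforce

lemma smooth_on_differentiable:
  "smooth_on U f \<Longrightarrow> p \<in> U \<Longrightarrow> f differentiable (at p)"
  using smooth_on_has_derivative_dd[of U f p "[]"] unfolding differentiable_def by auto

lemma linear_dd_Cons: "smooth_on U f \<Longrightarrow> p \<in> U \<Longrightarrow> linear (\<lambda>X. dd f (X # vs) p)"
  using smooth_on_has_derivative_dd has_derivative_linear by blast

lemma has_real_derivative_along_line:
  assumes "f differentiable (at (a + s *\<^sub>R X))"
  shows "((\<lambda>s. f (a + s *\<^sub>R X)) has_real_derivative frechet_derivative f (at (a + s *\<^sub>R X)) X) (at s)"
proof -
  let ?D = "frechet_derivative f (at (a + s *\<^sub>R X))"
  have line: "((\<lambda>s. a + s *\<^sub>R X) has_derivative (\<lambda>t. t *\<^sub>R X)) (at s)"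
    by (auto intro!: derivative_eq_intros)
  have "((\<lambda>s. f (a + s *\<^sub>R X)) has_derivative (\<lambda>t. ?D (t *\<^sub>R X))) (at s)"
    using has_derivative_compose[OF line assms[unfolded frechet_derivative_works]] by (simp add: o_def)
  moreover have "(\<lambda>t. ?D (t *\<^sub>R X)) = (*) (?D X)"
    using linear_frechet_derivative[OF assms] by (auto simp: linear_scale mult.commute)
  ultimately show ?thesis unfolding has_field_derivative_def by simp
qed

definition second_difference :: "('v::real_normed_vector \<Rightarrow> real) \<Rightarrow> 'v \<Rightarrow> 'v \<Rightarrow> 'v \<Rightarrow> real \<Rightarrow> real"
  where "second_difference f p X Y h = f (p + h *\<^sub>R X + h *\<^sub>R Y) - f (p + h *\<^sub>R X) - f (p + h *\<^sub>R Y) + f p"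

lemma second_difference_commute: "second_difference f p X Y h = second_difference f p Y X h"
proof -
  have "p + h *\<^sub>R Y + h *\<^sub>R X = p + h *\<^sub>R X + h *\<^sub>R Y" by (simp only: add_ac)
  then show ?thesis unfolding second_difference_def by (simp only:)
qed

lemma second_difference_mean_value:
  fixes f :: "'v::real_normed_vector \<Rightarrow> real"
  assumes sm: "smooth_on U f" and h: "0 < h"
    and inU: "\<And>s t. 0 \<le> s \<Longrightarrow> s \<le> h \<Longrightarrow> 0 \<le> t \<Longrightarrow> t \<le> h \<Longrightarrow> p + s *\<^sub>R X + t *\<^sub>R Y \<in> U"
  obtains \<xi> \<eta> where "0 < \<xi>" "\<xi> < h" "0 < \<eta>" "\<eta> < h"
    "second_difference f p X Y h = h * h * dd f [Y, X] (p + \<xi> *\<^sub>R X + \<eta> *\<^sub>R Y)"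
proof -
  define a where "a s = f (p + h *\<^sub>R Y + s *\<^sub>R X) - f (p + s *\<^sub>R X)" for s
  have "(a has_real_derivative (dd f [X] (p + h *\<^sub>R Y + s *\<^sub>R X) - dd f [X] (p + s *\<^sub>R X))) (at s)"
    if "0 \<le> s" "s \<le> h" for s
  proof -
    have "p + h *\<^sub>R Y + s *\<^sub>R X \<in> U" "p + s *\<^sub>R X \<in> U"
      using inU[of s h] inU[of s 0] that h by (simp_all add: add_ac)
    from DERIV_diff[OF has_real_derivative_along_line has_real_derivative_along_line,
        OF smooth_on_differentiable[OF sm this(1)] smooth_on_differentiable[OF sm this(2)]]
    show ?thesis unfolding a_def by (simp only: dd.simps)
  qed
  from MVT2[OF h this] obtain \<xi> where \<xi>: "0 < \<xi>" "\<xi> < h"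
    "a h - a 0 = (h - 0) * (dd f [X] (p + h *\<^sub>R Y + \<xi> *\<^sub>R X) - dd f [X] (p + \<xi> *\<^sub>R X))"
    by blast
  define b where "b t = dd f [X] (p + \<xi> *\<^sub>R X + t *\<^sub>R Y)" for t
  have "(b has_real_derivative (dd f [Y, X] (p + \<xi> *\<^sub>R X + t *\<^sub>R Y))) (at t)"
    if "0 \<le> t" "t \<le> h" for t
  proof -
    have "p + \<xi> *\<^sub>R X + t *\<^sub>R Y \<in> U" using inU[of \<xi> t] that \<xi> by simp
    from has_real_derivative_along_line[OF smooth_on_differentiable[OF smooth_on_dd[OF sm, of "[X]"] this]]
    show ?thesis unfolding b_def by simp
  qed
  from MVT2[OF h this] obtain \<eta> where \<eta>: "0 < \<eta>" "\<eta> < h"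
    "b h - b 0 = (h - 0) * dd f [Y, X] (p + \<xi> *\<^sub>R X + \<eta> *\<^sub>R Y)"
    by blast
  have "second_difference f p X Y h = a h - a 0"
    unfolding second_difference_def a_def by (simp add: add_ac)
  also have "\<dots> = h * (b h - b 0)"
    using \<xi>(3) unfolding b_def by (simp add: add_ac)
  finally show ?thesis using that \<xi> \<eta> by simp
qed

lemma dist_add_scaleR_le:
  assumes "0 \<le> s" "s \<le> h" "0 \<le> t" "t \<le> h"
  shows "dist (p + s *\<^sub>R X + t *\<^sub>R Y) p \<le> h * (norm X + norm Y)"
proof -
  have "dist (p + s *\<^sub>R X + t *\<^sub>R Y) p \<le> s * norm X + t * norm Y"
    using assms norm_triangle_ineq[of "s *\<^sub>R X" "t *\<^sub>R Y"] by (simp add: dist_norm)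
  also have "\<dots> \<le> h * norm X + h * norm Y"
    using assms by (intro add_mono mult_right_mono) auto
  finally show ?thesis by (simp add: distrib_left)
qed

lemma second_difference_tendsto:
  fixes f :: "'v::real_normed_vector \<Rightarrow> real"
  assumes sm: "smooth_on U f" and U: "open U" and p: "p \<in> U"
  shows "((\<lambda>h. second_difference f p X Y h / (h * h)) \<longlongrightarrow> dd f [Y, X] p) (at_right 0)"
proof (rule tendstoI)
  fix e :: real assume "0 < e"
  have "isCont (dd f [Y, X]) p"
    using sm U p continuous_on_eq_continuous_at unfolding smooth_on_def by blast
  then obtain d where d: "0 < d" "\<And>q. dist q p < d \<Longrightarrow> dist (dd f [Y, X] q) (dd f [Y, X] p) < e"
    using \<open>0 < e\<close> unfolding continuous_at_eps_delta by blast
  obtain r where r: "0 < r" "ball p r \<subseteq> U" using U p open_contains_ball by blast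
  define \<delta> where "\<delta> = min d r / (norm X + norm Y + 1)"
  have \<delta>: "0 < \<delta>" unfolding \<delta>_def using d r by (simp add: add_nonneg_pos)
  have near: "dist (p + s *\<^sub>R X + t *\<^sub>R Y) p < min d r"
    if "0 \<le> s" "s \<le> h" "0 \<le> t" "t \<le> h" "h < \<delta>" for s t h
  proof -
    have "dist (p + s *\<^sub>R X + t *\<^sub>R Y) p \<le> h * (norm X + norm Y)"
      by (rule dist_add_scaleR_le[OF that(1-4)])
    also have "\<dots> \<le> h * (norm X + norm Y + 1)"
      using that(1,2) by (intro mult_left_mono) auto
    also have "\<dots> < min d r"
      using that(5) unfolding \<delta>_def by (simp add: pos_less_divide_eq add_nonneg_pos)
    finally show ?thesis .
  qed
  show "\<forall>\<^sub>F h in at_right 0. dist (second_difference f p X Y h / (h * h)) (dd f [Y, X] p) < e"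
    unfolding eventually_at_right_field
  proof (intro exI[of _ \<delta>] conjI allI impI)
    fix h :: real assume h: "0 < h" "h < \<delta>"
    have "p + s *\<^sub>R X + t *\<^sub>R Y \<in> U" if "0 \<le> s" "s \<le> h" "0 \<le> t" "t \<le> h" for s t
      using near[OF that h(2)] r(2) by (auto simp: dist_commute)
    then obtain \<xi> \<eta> where "0 < \<xi>" "\<xi> < h" "0 < \<eta>" "\<eta> < h"
      and \<Delta>: "second_difference f p X Y h = h * h * dd f [Y, X] (p + \<xi> *\<^sub>R X + \<eta> *\<^sub>R Y)"
      by (rule second_difference_mean_value[OF sm h(1)])
    then have "dist (p + \<xi> *\<^sub>R X + \<eta> *\<^sub>R Y) p < d" using near[of \<xi> h \<eta>] h by simp
    then have "dist (dd f [Y, X] (p + \<xi> *\<^sub>R X + \<eta> *\<^sub>R Y)) (dd f [Y, X] p) < e" by (rule d(2))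
    then show "dist (second_difference f p X Y h / (h * h)) (dd f [Y, X] p) < e"
      using \<Delta> h(1) by (simp del: dd.simps)
  qed (rule \<delta>)
qed

text \<open>Both orders of differentiation compute the limit of the same symmetric second difference.\<close>

lemma dd_swap:
  assumes "smooth_on U f" "open U" "p \<in> U"
  shows "dd f [X, Y] p = dd f [Y, X] p"
  using tendsto_unique[OF trivial_limit_at_right_real
      second_difference_tendsto[OF assms, of Y X, unfolded second_difference_commute[of f p Y X]]
      second_difference_tendsto[OF assms, of X Y]] .

lemma bilinear_dd2:
  assumes "smooth_on U f" "open U" "p \<in> U"
  shows "bilinear (\<lambda>X Y. dd f [X, Y] p)"
proof -
  have "linear (\<lambda>X. dd f [X, Y] p)" for Y
    using linear_dd_Cons[OF assms(1,3), of "[Y]"] .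
  moreover have "(\<lambda>Y. dd f [X, Y] p) = (\<lambda>Y. dd f [Y, X] p)" for X
    using dd_swap[OF assms] by presburger
  ultimately show ?thesis unfolding bilinear_def by metis
qed

lemma dd3_swap12:
  assumes "smooth_on U f" "open U" "p \<in> U"
  shows "dd f [X, Y, Z] p = dd f [Y, X, Z] p"
  using dd_swap[OF smooth_on_dd[OF assms(1), of "[Z]"] assms(2,3)] by (simp add: dd_append[symmetric])

lemma dd3_swap23:
  assumes "smooth_on U f" "open U" "p \<in> U"
  shows "dd f [X, Y, Z] p = dd f [X, Z, Y] p"
proof -
  have "frechet_derivative (dd f [Y, Z]) (at p) = frechet_derivative (dd f [Z, Y]) (at p)"
    by (rule frechet_derivative_cong_open[OF assms(2,3)]) (rule dd_swap[OF assms(1,2)])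
  from fun_cong[OF this, of X] show ?thesis
    by (simp only: dd.simps(2)[of f X "[Y, Z]"] dd.simps(2)[of f X "[Z, Y]"])
qed

lemma dd_map_linear:
  assumes sm: "smooth_on U f" and U: "open U" and M: "bounded_linear M"
    and MU: "\<And>q. q \<in> U \<Longrightarrow> M q \<in> U" and hom: "\<And>q. q \<in> U \<Longrightarrow> f (M q) = c * f q"
    and q: "q \<in> U"
  shows "dd f (map M vs) (M q) = c * dd f vs q"
  using q
proof (induction vs arbitrary: q)
  case Nil then show ?case using hom by simp
next
  case (Cons v vs)
  let ?g = "dd f (map M vs)"
  have "((\<lambda>x. ?g (M x)) has_derivative (\<lambda>X. dd f (M X # map M vs) (M q))) (at q)"
    using has_derivative_compose[OF bounded_linear_imp_has_derivative[OF M]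
        smooth_on_has_derivative_dd[OF sm MU[OF Cons.prems]]] by (simp only: o_def)
  moreover have "((\<lambda>x. ?g (M x)) has_derivative (\<lambda>X. c * dd f (X # vs) q)) (at q)"
    by (rule has_derivative_transform_within_open[OF has_derivative_mult_right
          [OF smooth_on_has_derivative_dd[OF sm Cons.prems]] U Cons.prems])
      (simp only: Cons.IH)
  ultimately have "(\<lambda>X. dd f (M X # map M vs) (M q)) = (\<lambda>X. c * dd f (X # vs) q)"
    by (rule has_derivative_unique)
  from fun_cong[OF this, of v] show ?case by (simp del: dd.simps)
qed

section \<open>Algebras of smooth functions\<close>

text \<open>Smoothness of a function defined only implicitly is obtained by exhibiting its directional
  derivatives inside a class generated by the function itself.\<close>

inductive_set smooth_gen :: "'v::real_normed_vector set \<Rightarrow> ('v \<Rightarrow> real) set \<Rightarrow> ('v \<Rightarrow> real) set"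
  for U B where
  const: "(\<lambda>p. c) \<in> smooth_gen U B"
| linear: "bounded_linear l \<Longrightarrow> l \<in> smooth_gen U B"
| gen: "b \<in> B \<Longrightarrow> b \<in> smooth_gen U B"
| add: "f \<in> smooth_gen U B \<Longrightarrow> g \<in> smooth_gen U B \<Longrightarrow> (\<lambda>p. f p + g p) \<in> smooth_gen U B"
| mult: "f \<in> smooth_gen U B \<Longrightarrow> g \<in> smooth_gen U B \<Longrightarrow> (\<lambda>p. f p * g p) \<in> smooth_gen U B"
| powr: "f \<in> smooth_gen U B \<Longrightarrow> \<forall>p\<in>U. 0 < f p \<Longrightarrow> (\<lambda>p. f p powr a) \<in> smooth_gen U B"
| cong: "f \<in> smooth_gen U B \<Longrightarrow> \<forall>p\<in>U. f p = g p \<Longrightarrow> g \<in> smooth_gen U B"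

lemma smooth_gen_sum:
  "finite S \<Longrightarrow> (\<And>j. j \<in> S \<Longrightarrow> f j \<in> smooth_gen U B) \<Longrightarrow> (\<lambda>p. \<Sum>j\<in>S. f j p) \<in> smooth_gen U B"
  by (induction S rule: finite_induct) (auto intro: smooth_gen.const smooth_gen.add)

lemma smooth_gen_divide:
  assumes "f \<in> smooth_gen U B" "g \<in> smooth_gen U B" "\<forall>p\<in>U. 0 < g p"
  shows "(\<lambda>p. f p / g p) \<in> smooth_gen U B"
proof (rule smooth_gen.cong)
  show "(\<lambda>p. f p * g p powr (-1)) \<in> smooth_gen U B"
    by (rule smooth_gen.mult[OF assms(1) smooth_gen.powr[OF assms(2,3)]])
  show "\<forall>p\<in>U. f p * g p powr (-1) = f p / g p"
    using assms(3) by (auto simp: powr_minus divide_inverse)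
qed

lemma has_derivative_powr_const:
  fixes g :: "'a::real_normed_vector \<Rightarrow> real"
  assumes "(g has_derivative g') (at x)" "0 < g x"
  shows "((\<lambda>z. g z powr c) has_derivative (\<lambda>h. c * g' h * g x powr (c - 1))) (at x)"
proof -
  have "((\<lambda>z. g z powr c) has_derivative (\<lambda>h. (g x powr c) * (0 * ln (g x) + g' h * c / g x))) (at x)"
    using assms by (intro has_derivative_powr) auto
  moreover have "g x powr (c - 1) = g x powr c / g x"
    using assms(2) by (simp add: powr_diff)
  ultimately show ?thesis by (simp add: field_simps)
qed

definition derivs_in :: "'v::real_normed_vector set \<Rightarrow> ('v \<Rightarrow> real) set \<Rightarrow> ('v \<Rightarrow> real) \<Rightarrow> bool" where
  "derivs_in U B f \<longleftrightarrow> (\<forall>p\<in>U. f differentiable (at p)) \<and>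
     (\<forall>v. (\<lambda>p. frechet_derivative f (at p) v) \<in> smooth_gen U B)"

lemma derivs_inI:
  assumes "\<And>p. p \<in> U \<Longrightarrow> (f has_derivative f' p) (at p)"
    and "\<And>v. (\<lambda>p. f' p v) \<in> smooth_gen U B"
  shows "derivs_in U B f"
  unfolding derivs_in_def
proof (intro conjI ballI allI)
  fix p assume "p \<in> U"
  then show "f differentiable at p" using assms(1) unfolding differentiable_def by blast
next
  fix v
  show "(\<lambda>p. frechet_derivative f (at p) v) \<in> smooth_gen U B"
    using assms(2)[of v] by (rule smooth_gen.cong) (simp add: frechet_derivative_at[OF assms(1)])
qed

lemma derivs_in_has_derivative:
  "derivs_in U B f \<Longrightarrow> p \<in> U \<Longrightarrow> (f has_derivative frechet_derivative f (at p)) (at p)"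
  unfolding derivs_in_def using frechet_derivative_works by blast

lemma derivs_in_smooth_gen:
  "derivs_in U B f \<Longrightarrow> (\<lambda>p. frechet_derivative f (at p) v) \<in> smooth_gen U B"
  unfolding derivs_in_def by blast

lemma derivs_in_const: "derivs_in U B (\<lambda>p. c)"
  by (rule derivs_inI[where f' = "\<lambda>p h. 0"]) (simp_all add: smooth_gen.const)

lemma derivs_in_linear: "bounded_linear l \<Longrightarrow> derivs_in U B l"
  by (rule derivs_inI[where f' = "\<lambda>p. l"]) (simp_all add: smooth_gen.const bounded_linear_imp_has_derivative)

lemma derivs_in_add:
  assumes f: "derivs_in U B f" and g: "derivs_in U B g"
  shows "derivs_in U B (\<lambda>p. f p + g p)"
proof (rule derivs_inI[where f' = "\<lambda>p h. frechet_derivative f (at p) h + frechet_derivative g (at p) h"])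
  show "((\<lambda>p. f p + g p) has_derivative
      (\<lambda>h. frechet_derivative f (at p) h + frechet_derivative g (at p) h)) (at p)" if "p \<in> U" for p
    by (rule has_derivative_add[OF derivs_in_has_derivative[OF f that] derivs_in_has_derivative[OF g that]])
qed (rule smooth_gen.add[OF derivs_in_smooth_gen[OF f] derivs_in_smooth_gen[OF g]])

lemma derivs_in_mult:
  assumes "f \<in> smooth_gen U B" "g \<in> smooth_gen U B" and f: "derivs_in U B f" and g: "derivs_in U B g"
  shows "derivs_in U B (\<lambda>p. f p * g p)"
proof (rule derivs_inI[where f' = "\<lambda>p h. f p * frechet_derivative g (at p) h + frechet_derivative f (at p) h * g p"])
  show "((\<lambda>p. f p * g p) has_derivative
      (\<lambda>h. f p * frechet_derivative g (at p) h + frechet_derivative f (at p) h * g p)) (at p)" if "p \<in> U" for p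
    by (rule has_derivative_mult[OF derivs_in_has_derivative[OF f that] derivs_in_has_derivative[OF g that]])
qed (rule smooth_gen.add[OF smooth_gen.mult[OF assms(1) derivs_in_smooth_gen[OF g]]
      smooth_gen.mult[OF derivs_in_smooth_gen[OF f] assms(2)]])

lemma derivs_in_powr:
  assumes "f \<in> smooth_gen U B" "\<forall>p\<in>U. 0 < f p" and f: "derivs_in U B f"
  shows "derivs_in U B (\<lambda>p. f p powr a)"
proof (rule derivs_inI[where f' = "\<lambda>p h. a * frechet_derivative f (at p) h * f p powr (a - 1)"])
  show "((\<lambda>p. f p powr a) has_derivative (\<lambda>h. a * frechet_derivative f (at p) h * f p powr (a - 1))) (at p)"
    if "p \<in> U" for p
    by (rule has_derivative_powr_const[OF derivs_in_has_derivative[OF f that] bspec[OF assms(2) that]])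
qed (rule smooth_gen.mult[OF smooth_gen.mult[OF smooth_gen.const derivs_in_smooth_gen[OF f]]
      smooth_gen.powr[OF assms(1,2)]])

lemma derivs_in_cong:
  assumes U: "open U" and f: "derivs_in U B f" and fg: "\<forall>p\<in>U. f p = g p"
  shows "derivs_in U B g"
proof (rule derivs_inI[where f' = "\<lambda>p. frechet_derivative f (at p)"])
  show "(g has_derivative frechet_derivative f (at p)) (at p)" if "p \<in> U" for p
    by (rule has_derivative_transform_within_open[OF derivs_in_has_derivative[OF f that] U that])
      (use fg in blast)
qed (rule derivs_in_smooth_gen[OF f])

lemma smooth_gen_derivs_in:
  assumes U: "open U" and gens: "\<And>b. b \<in> B \<Longrightarrow> derivs_in U B b" and f: "f \<in> smooth_gen U B"
  shows "derivs_in U B f"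
  using f
proof induction
  case (gen b)
  then show ?case by (rule gens)
qed (blast intro: derivs_in_const derivs_in_linear derivs_in_add derivs_in_mult derivs_in_powr
    derivs_in_cong[OF U])+

lemma smooth_gen_dd:
  assumes "open U" "\<And>b. b \<in> B \<Longrightarrow> derivs_in U B b" "f \<in> smooth_gen U B"
  shows "dd f vs \<in> smooth_gen U B"
proof (induction vs)
  case Nil
  from assms(3) show ?case by (simp only: dd.simps)
next
  case (Cons v vs)
  from derivs_in_smooth_gen[OF smooth_gen_derivs_in[OF assms(1,2) Cons.IH]]
  show ?case by (simp only: dd.simps)
qed

lemma smooth_gen_smooth_on:
  assumes "open U" "\<And>b. b \<in> B \<Longrightarrow> derivs_in U B b" "f \<in> smooth_gen U B"
  shows "smooth_on U f"
  unfolding smooth_on_def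
proof (intro allI conjI ballI)
  fix vs
  have diff: "dd f vs differentiable (at p)" if "p \<in> U" for p
    using smooth_gen_derivs_in[OF assms(1,2) smooth_gen_dd[OF assms]] that
    unfolding derivs_in_def by blast
  then show "continuous_on U (dd f vs)"
    by (intro differentiable_imp_continuous_on differentiable_at_imp_differentiable_on)
  show "dd f vs differentiable at p" if "p \<in> U" for p using diff that .
qed

lemma vec_nonzero_component: "(q::'a::zero^'n) \<noteq> 0 \<Longrightarrow> \<exists>j. q $ j \<noteq> 0"
  by (metis vec_eq_iff zero_index)

lemma in_punctured [simp]: "p \<in> punctured \<longleftrightarrow> p \<noteq> 0"
  unfolding punctured_def by simp

lemma open_punctured: "open punctured"
  unfolding punctured_def by (simp add: open_Compl)

lemma bounded_linear_inner_vec_nth [bounded_linear_intros]: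
  "bounded_linear (\<lambda>x::'a::real_inner^'n. a \<bullet> x $ j)"
  by (rule bounded_linear_inner_right_comp[OF bounded_linear_vec_nth])

lemma has_derivative_scaled_inner_vec_nth:
  "((\<lambda>q::complex^'n. c * (q $ j \<bullet> w $ j)) has_derivative (\<lambda>v. c * (v $ j \<bullet> w $ j))) (at p)"
  by (rule bounded_linear_imp_has_derivative[OF bounded_linear_compose[OF bounded_linear_mult_right
        bounded_linear_inner_left_comp[OF bounded_linear_vec_nth]]])

lemma has_derivative_scaled_norm_vec_nth:
  "((\<lambda>q::complex^'n. c * (cmod (q $ j))\<^sup>2) has_derivative (\<lambda>v. c * (2 * (p $ j \<bullet> v $ j)))) (at p)"
proof -
  have "((\<lambda>q::complex^'n. q $ j \<bullet> q $ j) has_derivative (\<lambda>v. p $ j \<bullet> v $ j + v $ j \<bullet> p $ j)) (at p)"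
    by (intro has_derivative_inner bounded_linear_imp_has_derivative bounded_linear_vec_nth)
  from has_derivative_mult_right[OF this, of c] show ?thesis
    unfolding power2_norm_eq_inner by (simp add: inner_commute)
qed

lemma Jc_nth [simp]: "Jc v $ j = \<i> * v $ j"
  unfolding Jc_def by simp

definition diag :: "('n \<Rightarrow> complex) \<Rightarrow> complex^'n \<Rightarrow> complex^'n" where
  "diag a v = (\<chi> j. a j * v $ j)"

definition diag_flow :: "('n \<Rightarrow> complex) \<Rightarrow> real \<Rightarrow> complex^'n \<Rightarrow> complex^'n" where
  "diag_flow k t = diag (\<lambda>j. exp (of_real t * k j))"

lemma diag_nonzero: "(\<And>j. a j \<noteq> 0) \<Longrightarrow> q \<noteq> 0 \<Longrightarrow> diag a q \<noteq> 0"
  unfolding diag_def by (metis (no_types, lifting) mult_eq_0_iff vec_lambda_beta vec_nonzero_component zero_index)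

lemma bounded_linear_diag: "bounded_linear (diag a)"
proof -
  have "linear (diag a)" unfolding diag_def
    by (rule linearI) (simp_all add: vec_eq_iff algebra_simps scaleR_conv_of_real)
  then show ?thesis by (simp add: linear_conv_bounded_linear)
qed

lemma bounded_linear_diag_flow: "bounded_linear (diag_flow k t)"
  unfolding diag_flow_def by (rule bounded_linear_diag)

lemma bounded_linear_axis: "bounded_linear (axis j :: complex \<Rightarrow> complex^'n)"
proof -
  have "linear (axis j :: complex \<Rightarrow> complex^'n)" unfolding axis_def
    by (rule linearI) (simp_all add: vec_eq_iff)
  then show ?thesis by (simp add: linear_conv_bounded_linear)
qed

lemma diag_flow_zero [simp]: "diag_flow k 0 v = v"
  unfolding diag_flow_def diag_def by (simp add: vec_eq_iff)

lemma diag_flow_inverse [simp]: "diag_flow k t (diag_flow k (- t) v) = v"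
  unfolding diag_flow_def diag_def by (simp add: vec_eq_iff exp_minus field_simps)

lemma diag_flow_nonzero: "q \<noteq> 0 \<Longrightarrow> diag_flow k t q \<noteq> 0"
  unfolding diag_flow_def by (rule diag_nonzero) simp

lemma has_derivative_diag_flow: "((\<lambda>t. diag_flow k t v) has_derivative (\<lambda>h. h *\<^sub>R diag k v)) (at 0)"
proof -
  have exp_line: "((\<lambda>t. exp (of_real t * c) * z) has_derivative (\<lambda>h. h *\<^sub>R (c * z))) (at 0)"
    for c z :: complex
  proof -
    have "((\<lambda>w. exp (w * c) * z) has_field_derivative exp (of_real 0 * c) * c * z) (at (of_real 0))"
      by (auto intro!: derivative_eq_intros)
    from has_vector_derivative_real_field[OF this] show ?thesis
      unfolding has_vector_derivative_def by simp
  qed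
  have "((\<lambda>t. \<Sum>j\<in>UNIV. axis j (exp (of_real t * k j) * v $ j)) has_derivative
      (\<lambda>h. \<Sum>j\<in>UNIV. axis j (h *\<^sub>R (k j * v $ j)))) (at 0)"
    by (intro has_derivative_sum bounded_linear.has_derivative[OF bounded_linear_axis] exp_line)
  moreover have "(\<lambda>t. \<Sum>j\<in>UNIV. axis j (exp (of_real t * k j) * v $ j)) = (\<lambda>t. diag_flow k t v)"
    unfolding diag_flow_def diag_def axis_def by (simp add: vec_eq_iff fun_eq_iff)
  moreover have "(\<lambda>h. \<Sum>j\<in>UNIV. axis j (h *\<^sub>R (k j * v $ j))) = (\<lambda>h. h *\<^sub>R diag k v)"
    unfolding diag_def axis_def by (simp add: vec_eq_iff fun_eq_iff)
  ultimately show ?thesis by simp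
qed

lemma has_derivative_diag_flow_neg:
  "((\<lambda>t. diag_flow k (- t) v) has_derivative (\<lambda>h. - h *\<^sub>R diag k v)) (at 0)"
proof -
  have m: "((\<lambda>t::real. - t) has_derivative uminus) (at 0)" by (auto intro!: derivative_eq_intros)
  have d: "((\<lambda>t. diag_flow k t v) has_derivative (\<lambda>h. h *\<^sub>R diag k v)) (at (- 0))"
    using has_derivative_diag_flow by simp
  from has_derivative_compose[OF m d] show ?thesis by simp
qed

lemma Jc_Jc [simp]: "Jc (Jc v) = - v"
  unfolding Jc_def by (simp add: vec_eq_iff)

lemma linear_Jc: "linear Jc"
  unfolding Jc_def by (rule linearI) (simp_all add: vec_eq_iff algebra_simps scaleR_conv_of_real)

lemma Jc_diag: "Jc (diag a v) = diag a (Jc v)"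
  unfolding Jc_def diag_def by (simp add: vec_eq_iff)

lemma diag_i_times: "diag (\<lambda>j. \<i> * a j) v = Jc (diag a v)"
  unfolding Jc_def diag_def by (simp add: vec_eq_iff)

lemma hopf_gen_diag: "hopf_gen lam = diag (\<lambda>j. lam $ j)"
  unfolding hopf_gen_def diag_def by (simp add: fun_eq_iff)

text \<open>Differentiating \<open>f (diag_flow k t q) = exp (t * \<gamma>) * f q\<close> at \<open>t = 0\<close> gives Euler-type
  identities for the derivatives of \<open>f\<close> along the generator \<open>diag k\<close>.\<close>

lemma has_derivative_exp_scaled: "((\<lambda>t. exp (t * \<gamma>)) has_derivative (*) \<gamma>) (at (0::real))"
proof -
  have "((\<lambda>t. exp (t * \<gamma>)) has_real_derivative \<gamma>) (at (0::real))"
    by (auto intro!: derivative_eq_intros)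
  then show ?thesis unfolding has_field_derivative_def .
qed

lemma dd_along_diag_flow:
  assumes sm: "smooth_on U f" and U: "open U" and q: "q \<in> U"
    and inv: "\<And>t q. q \<in> U \<Longrightarrow> diag_flow k t q \<in> U"
    and hom: "\<And>t q. q \<in> U \<Longrightarrow> f (diag_flow k t q) = exp (t * \<gamma>) * f q"
  shows "dd f vs (diag_flow k t q) = exp (t * \<gamma>) * dd f (map (diag_flow k (- t)) vs) q"
  using dd_map_linear[where M = "diag_flow k t" and c = "exp (t * \<gamma>)" and vs = "map (diag_flow k (- t)) vs",
      OF sm U bounded_linear_diag_flow inv hom q]
  by (simp add: o_def)

lemma has_derivative_dd_along_diag_flow:
  assumes sm: "smooth_on U f" and q: "q \<in> U"
  shows "((\<lambda>t. dd f vs (diag_flow k t q)) has_derivative (\<lambda>h. h * dd f (diag k q # vs) q)) (at 0)"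
proof -
  have "(dd f vs has_derivative (\<lambda>X. dd f (X # vs) q)) (at (diag_flow k 0 q))"
    using smooth_on_has_derivative_dd[OF sm q] by simp
  from has_derivative_compose[OF has_derivative_diag_flow this]
  have "((\<lambda>t. dd f vs (diag_flow k t q)) has_derivative (\<lambda>h. dd f (h *\<^sub>R diag k q # vs) q)) (at 0)"
    by (simp add: o_def)
  moreover have "dd f (h *\<^sub>R diag k q # vs) q = h * dd f (diag k q # vs) q" for h
    using linear_scale[OF linear_dd_Cons[OF sm q]] by simp
  ultimately show ?thesis by simp
qed

lemma dd0_diag_flow_euler:
  assumes sm: "smooth_on U f" and U: "open U" and q: "q \<in> U"
    and inv: "\<And>t q. q \<in> U \<Longrightarrow> diag_flow k t q \<in> U"
    and hom: "\<And>t q. q \<in> U \<Longrightarrow> f (diag_flow k t q) = exp (t * \<gamma>) * f q"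
  shows "dd f [diag k q] q = \<gamma> * f q"
proof -
  have "((\<lambda>t. exp (t * \<gamma>) * f q) has_derivative (\<lambda>h. \<gamma> * h * f q)) (at 0)"
    using has_derivative_mult_left[OF has_derivative_exp_scaled] .
  then have "((\<lambda>t. dd f [] (diag_flow k t q)) has_derivative (\<lambda>h. \<gamma> * h * f q)) (at 0)"
    using hom[OF q] by simp
  from fun_cong[OF has_derivative_unique[OF has_derivative_dd_along_diag_flow[OF sm q] this], of 1]
  show ?thesis by simp
qed

lemma dd1_diag_flow_euler:
  assumes sm: "smooth_on U f" and U: "open U" and q: "q \<in> U"
    and inv: "\<And>t q. q \<in> U \<Longrightarrow> diag_flow k t q \<in> U"
    and hom: "\<And>t q. q \<in> U \<Longrightarrow> f (diag_flow k t q) = exp (t * \<gamma>) * f q"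
  shows "dd f [diag k q, Y] q = \<gamma> * dd f [Y] q - dd f [diag k Y] q"
proof -
  define L where "L a = dd f [a] q" for a
  have L: "bounded_linear L"
    unfolding L_def using linear_dd_Cons[OF sm q, of "[]"] linear_conv_bounded_linear by auto
  have "((\<lambda>t. exp (t * \<gamma>) * L (diag_flow k (- t) Y)) has_derivative
      (\<lambda>h. exp (0 * \<gamma>) * L (- h *\<^sub>R diag k Y) + \<gamma> * h * L (diag_flow k (- 0) Y))) (at 0)"
    by (rule has_derivative_mult[OF has_derivative_exp_scaled
          bounded_linear.has_derivative[OF L has_derivative_diag_flow_neg]])
  moreover have "(\<lambda>t. dd f [Y] (diag_flow k t q)) = (\<lambda>t. exp (t * \<gamma>) * L (diag_flow k (- t) Y))"
    unfolding L_def using dd_along_diag_flow[OF sm U q inv hom, of "[Y]"] by simp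
  ultimately have "(\<lambda>h. h * dd f [diag k q, Y] q)
      = (\<lambda>h. L (- h *\<^sub>R diag k Y) + \<gamma> * h * L Y)"
    using has_derivative_unique[OF has_derivative_dd_along_diag_flow[OF sm q, of "[Y]"]] by simp
  from fun_cong[OF this, of 1] show ?thesis
    unfolding L_def using linear_neg[OF linear_dd_Cons[OF sm q, of "[]"]] by simp
qed

lemma dd2_diag_flow_euler:
  assumes sm: "smooth_on U f" and U: "open U" and q: "q \<in> U"
    and inv: "\<And>t q. q \<in> U \<Longrightarrow> diag_flow k t q \<in> U"
    and hom: "\<And>t q. q \<in> U \<Longrightarrow> f (diag_flow k t q) = exp (t * \<gamma>) * f q"
  shows "dd f [diag k q, X, Y] q = \<gamma> * dd f [X, Y] q - dd f [diag k X, Y] q - dd f [X, diag k Y] q"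
proof -
  define B where "B a b = dd f [a, b] q" for a b
  have B: "bounded_bilinear B"
    unfolding B_def using bilinear_dd2[OF sm U q] bilinear_conv_bounded_bilinear by blast
  have "((\<lambda>t. exp (t * \<gamma>) * B (diag_flow k (- t) X) (diag_flow k (- t) Y)) has_derivative
      (\<lambda>h. exp (0 * \<gamma>) * (B (diag_flow k (- 0) X) (- h *\<^sub>R diag k Y) + B (- h *\<^sub>R diag k X) (diag_flow k (- 0) Y))
        + \<gamma> * h * B (diag_flow k (- 0) X) (diag_flow k (- 0) Y))) (at 0)"
    by (rule has_derivative_mult[OF has_derivative_exp_scaled
          bounded_bilinear.FDERIV[OF B has_derivative_diag_flow_neg has_derivative_diag_flow_neg]])
  moreover have "(\<lambda>t. dd f [X, Y] (diag_flow k t q)) = (\<lambda>t. exp (t * \<gamma>) * B (diag_flow k (- t) X) (diag_flow k (- t) Y))"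
    unfolding B_def using dd_along_diag_flow[OF sm U q inv hom, of "[X, Y]"] by simp
  ultimately have "(\<lambda>h. h * dd f [diag k q, X, Y] q)
      = (\<lambda>h. B X (- h *\<^sub>R diag k Y) + B (- h *\<^sub>R diag k X) Y + \<gamma> * h * B X Y)"
    using has_derivative_unique[OF has_derivative_dd_along_diag_flow[OF sm q, of "[X, Y]"]] by simp
  from fun_cong[OF this, of 1] show ?thesis
    unfolding B_def using bounded_bilinear.minus_left[OF B] bounded_bilinear.minus_right[OF B]
    by (simp add: B_def)
qed

lemma two_mult_le_add_of_sq_le:
  fixes a x y :: real
  assumes "a\<^sup>2 \<le> x * y" "0 \<le> x" "0 \<le> y"
  shows "2 * a \<le> x + y"
proof (rule power2_le_imp_le)
  have "(x + y)\<^sup>2 = 4 * (x * y) + (x - y)\<^sup>2" "(2 * a)\<^sup>2 = 4 * a\<^sup>2"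
    by (simp_all add: power2_eq_square algebra_simps)
  then show "(2 * a)\<^sup>2 \<le> (x + y)\<^sup>2" using assms(1) zero_le_power2[of "x - y"] by linarith
qed (use assms in simp)

lemma Cauchy_Schwarz_2:
  fixes c1 c2 a1 a2 :: real
  shows "(c1 * a1 + c2 * a2)\<^sup>2 \<le> (c1\<^sup>2 + c2\<^sup>2) * (a1\<^sup>2 + a2\<^sup>2)"
proof -
  have "(c1\<^sup>2 + c2\<^sup>2) * (a1\<^sup>2 + a2\<^sup>2) - (c1 * a1 + c2 * a2)\<^sup>2 = (c1 * a2 - c2 * a1)\<^sup>2"
    by (simp add: power2_eq_square algebra_simps)
  then show ?thesis by (metis diff_ge_0_iff_ge zero_le_power2)
qed

lemma quadratic_form_pos:
  fixes S W T e C1 C2 A1 A2 :: real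
  assumes S: "0 < S" and W: "0 < W" and T: "0 \<le> T" and e: "0 < e"
    and CT: "C1\<^sup>2 + C2\<^sup>2 \<le> T * W"
  shows "0 < S\<^sup>2 * W - 2 * S * (C1 * A1 + C2 * A2) + (T + e) * (A1\<^sup>2 + A2\<^sup>2)"
proof -
  define A where "A = A1\<^sup>2 + A2\<^sup>2"
  have A: "0 \<le> A" unfolding A_def by simp
  have "(S * (C1 * A1 + C2 * A2))\<^sup>2 \<le> S\<^sup>2 * ((C1\<^sup>2 + C2\<^sup>2) * A)"
    unfolding A_def power_mult_distrib by (intro mult_left_mono Cauchy_Schwarz_2) simp
  also have "\<dots> \<le> S\<^sup>2 * (T * W * A)"
    using CT A by (intro mult_left_mono mult_right_mono) auto
  also have "\<dots> = (S\<^sup>2 * W) * (T * A)" by (simp add: algebra_simps)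
  finally have SD: "2 * (S * (C1 * A1 + C2 * A2)) \<le> S\<^sup>2 * W + T * A"
    by (rule two_mult_le_add_of_sq_le) (use S W T A in simp_all)
  show ?thesis
  proof (cases "A = 0")
    case True
    then have "A1 = 0" "A2 = 0" unfolding A_def by (simp_all add: sum_power2_eq_zero_iff)
    then show ?thesis using S W by simp
  next
    case False
    with A e have "0 < e * A" by simp
    with SD show ?thesis unfolding A_def by (simp add: algebra_simps)
  qed
qed

lemma Cauchy_Schwarz_pairs:
  fixes k t w P V a b :: "'j \<Rightarrow> real"
  assumes nn: "\<And>j. j \<in> I \<Longrightarrow> 0 \<le> k j \<and> 0 \<le> t j \<and> 0 \<le> w j \<and> 0 \<le> P j \<and> 0 \<le> V j"
    and kk: "\<And>j. j \<in> I \<Longrightarrow> (k j)\<^sup>2 = t j * w j"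
    and ab: "\<And>j. j \<in> I \<Longrightarrow> (a j)\<^sup>2 + (b j)\<^sup>2 = P j * V j"
  shows "(\<Sum>j\<in>I. k j * a j)\<^sup>2 + (\<Sum>j\<in>I. k j * b j)\<^sup>2 \<le> (\<Sum>j\<in>I. t j * P j) * (\<Sum>j\<in>I. w j * V j)"
proof -
  text \<open>Triangle inequality for \<open>z j = k j (a j + i b j)\<close>, then Cauchy-Schwarz for the moduli.\<close>
  define z where "z j = complex_of_real (k j) * Complex (a j) (b j)" for j
  have "cmod (z j) = sqrt (t j * P j) * sqrt (w j * V j)" if j: "j \<in> I" for j
  proof -
    have "cmod (z j) = sqrt ((k j)\<^sup>2) * sqrt ((a j)\<^sup>2 + (b j)\<^sup>2)"
      unfolding z_def norm_mult norm_of_real using nn[OF j] by (simp add: complex_norm)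
    also have "\<dots> = sqrt (t j * P j) * sqrt (w j * V j)"
      using kk[OF j] ab[OF j] by (simp add: real_sqrt_mult[symmetric] algebra_simps)
    finally show ?thesis .
  qed
  then have norms: "(\<Sum>j\<in>I. cmod (z j)) = (\<Sum>j\<in>I. sqrt (t j * P j) * sqrt (w j * V j))"
    by (rule sum.cong[OF refl])
  have "(\<Sum>j\<in>I. k j * a j)\<^sup>2 + (\<Sum>j\<in>I. k j * b j)\<^sup>2 = (cmod (\<Sum>j\<in>I. z j))\<^sup>2"
    unfolding cmod_power2 z_def by (simp add: Re_sum Im_sum)
  also have "\<dots> \<le> (\<Sum>j\<in>I. cmod (z j))\<^sup>2"
    by (intro power_mono norm_sum) simp
  also have "\<dots> \<le> (\<Sum>j\<in>I. (sqrt (t j * P j))\<^sup>2) * (\<Sum>j\<in>I. (sqrt (w j * V j))\<^sup>2)"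
    unfolding norms by (rule Cauchy_Schwarz_ineq_sum)
  also have "\<dots> = (\<Sum>j\<in>I. t j * P j) * (\<Sum>j\<in>I. w j * V j)"
  proof -
    have "(\<Sum>j\<in>I. (sqrt (t j * P j))\<^sup>2) = (\<Sum>j\<in>I. t j * P j)"
      "(\<Sum>j\<in>I. (sqrt (w j * V j))\<^sup>2) = (\<Sum>j\<in>I. w j * V j)"
      using nn by (auto intro!: sum.cong)
    then show ?thesis by simp
  qed
  finally show ?thesis .
qed

lemma inner_sq_add_inner_i_sq: "(p \<bullet> v)\<^sup>2 + (p \<bullet> (\<i> * v))\<^sup>2 = (cmod p)\<^sup>2 * (cmod v)\<^sup>2"
  unfolding inner_complex_def cmod_power2 by (simp add: power2_eq_square algebra_simps)

section \<open>The weighted radius function\<close>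

locale hopf_weights =
  fixes \<alpha> :: "'n::finite \<Rightarrow> real"
  assumes weights_pos: "0 < \<alpha> j"
begin

definition weighted_sum :: "complex^'n \<Rightarrow> real \<Rightarrow> real" where
  "weighted_sum q s = (\<Sum>j\<in>UNIV. (cmod (q $ j))\<^sup>2 * s powr (- \<alpha> j))"

text \<open>For \<open>q \<noteq> 0\<close> and \<open>y > 0\<close> the equation \<open>weighted_sum q s = y\<close> has exactly one solution \<open>s > 0\<close>;
  otherwise \<open>level_root\<close> is an unspecified junk value.\<close>

definition level_root :: "complex^'n \<Rightarrow> real \<Rightarrow> real" where
  "level_root q y = (THE s. 0 < s \<and> weighted_sum q s = y)"

definition phi :: "complex^'n \<Rightarrow> real" where
  "phi q = level_root q 1"

lemma weighted_sum_strict_antimono: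
  assumes q: "q \<noteq> 0" and s: "0 < s" "s < t"
  shows "weighted_sum q t < weighted_sum q s"
  unfolding weighted_sum_def
proof (rule sum_strict_mono_ex1)
  show "\<forall>j\<in>UNIV. (cmod (q $ j))\<^sup>2 * t powr - \<alpha> j \<le> (cmod (q $ j))\<^sup>2 * s powr - \<alpha> j"
    using weights_pos s by (auto intro!: mult_left_mono less_imp_le[OF powr_less_mono2_neg])
  obtain j where "q $ j \<noteq> 0" using vec_nonzero_component[OF q] by blast
  then show "\<exists>j\<in>UNIV. (cmod (q $ j))\<^sup>2 * t powr - \<alpha> j < (cmod (q $ j))\<^sup>2 * s powr - \<alpha> j"
    using weights_pos s by (auto intro!: bexI[of _ j] mult_strict_left_mono powr_less_mono2_neg)
qed simp

lemma weighted_sum_eq_solvable: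
  assumes q: "q \<noteq> 0" and y: "0 < y"
  shows "\<exists>s>0. weighted_sum q s = y"
proof -
  define m where "m = Min (range \<alpha>)"
  have m: "0 < m" "\<And>j. m \<le> \<alpha> j" unfolding m_def using weights_pos by auto
  define N where "N = (\<Sum>j\<in>UNIV. (cmod (q $ j))\<^sup>2)"
  obtain j where "q $ j \<noteq> 0" using vec_nonzero_component[OF q] by blast
  then have N: "0 < N" unfolding N_def by (intro sum_pos2[where i=j]) auto
  define c where "c = (N / y) powr (1 / m)"
  have c: "0 < c" "N * c powr (- m) = y"
    unfolding c_def using N y m by (simp_all add: powr_powr powr_minus divide_simps)
  text \<open>On \<open>s \<le> 1\<close> every weight may be replaced by the least one from below, on \<open>s \<ge> 1\<close> from above.\<close>
  define s0 where "s0 = min 1 c"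
  define s1 where "s1 = max 1 c"
  have s01: "0 < s0" "s0 \<le> s1" "s0 \<le> 1" "1 \<le> s1" "s0 \<le> c" "c \<le> s1"
    unfolding s0_def s1_def using c by auto
  have "y \<le> N * s0 powr (- m)"
    using c N m s01 by (metis mult_left_mono powr_mono2' less_imp_le neg_le_0_iff_le)
  also have "\<dots> = (\<Sum>j\<in>UNIV. (cmod (q $ j))\<^sup>2 * s0 powr (- m))"
    unfolding N_def by (simp add: sum_distrib_right)
  also have "\<dots> \<le> weighted_sum q s0"
    unfolding weighted_sum_def using m s01 by (intro sum_mono mult_left_mono powr_mono') auto
  finally have lo: "y \<le> weighted_sum q s0" .
  have "weighted_sum q s1 \<le> (\<Sum>j\<in>UNIV. (cmod (q $ j))\<^sup>2 * s1 powr (- m))"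
    unfolding weighted_sum_def using m s01 by (intro sum_mono mult_left_mono powr_mono) auto
  also have "\<dots> = N * s1 powr (- m)"
    unfolding N_def by (simp add: sum_distrib_right)
  also have "\<dots> \<le> y"
    using c N m s01 by (metis mult_left_mono powr_mono2' less_imp_le neg_le_0_iff_le)
  finally have hi: "weighted_sum q s1 \<le> y" .
  have "continuous_on {s0..s1} (weighted_sum q)"
    unfolding weighted_sum_def using s01 by (intro continuous_intros) auto
  then obtain s where "s0 \<le> s" "s \<le> s1" "weighted_sum q s = y"
    using IVT2'[of "weighted_sum q" s1 y s0] lo hi s01 by blast
  then show ?thesis using s01 by (intro exI[of _ s]) auto
qed

lemma level_root_eqI:
  assumes q: "q \<noteq> 0" and s: "0 < s" "weighted_sum q s = y"
  shows "level_root q y = s"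
  unfolding level_root_def
proof (rule the_equality)
  fix t assume t: "0 < t \<and> weighted_sum q t = y"
  show "t = s"
    using weighted_sum_strict_antimono[OF q] s t by (cases t s rule: linorder_cases) force+
qed (use s in simp)

lemma
  assumes "q \<noteq> 0" "0 < y"
  shows level_root_pos: "0 < level_root q y"
    and weighted_sum_level_root: "weighted_sum q (level_root q y) = y"
  using weighted_sum_eq_solvable[OF assms] level_root_eqI[OF assms(1)] by auto

lemma less_level_root_iff:
  assumes "q \<noteq> 0" "0 < y" "0 < a"
  shows "a < level_root q y \<longleftrightarrow> y < weighted_sum q a"
  using weighted_sum_strict_antimono[OF assms(1) assms(3), of "level_root q y"]
    weighted_sum_strict_antimono[OF assms(1) level_root_pos[OF assms(1,2)], of a]
  by (cases a "level_root q y" rule: linorder_cases) (auto simp: weighted_sum_level_root[OF assms(1,2)])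

lemma level_root_less_iff:
  assumes "q \<noteq> 0" "0 < y" "0 < a"
  shows "level_root q y < a \<longleftrightarrow> weighted_sum q a < y"
  using weighted_sum_strict_antimono[OF assms(1) assms(3), of "level_root q y"]
    weighted_sum_strict_antimono[OF assms(1) level_root_pos[OF assms(1,2)], of a]
  by (cases a "level_root q y" rule: linorder_cases) (auto simp: weighted_sum_level_root[OF assms(1,2)])

lemma phi_pos: "q \<noteq> 0 \<Longrightarrow> 0 < phi q"
  unfolding phi_def by (simp add: level_root_pos)

lemma weighted_sum_phi: "q \<noteq> 0 \<Longrightarrow> weighted_sum q (phi q) = 1"
  unfolding phi_def by (simp add: weighted_sum_level_root)

lemma isCont_level_root:
  assumes q0: "q0 \<noteq> 0" and y0: "0 < y0"
  shows "isCont (\<lambda>z. level_root (fst z) (snd z)) (q0, y0)"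
proof -
  have lim: "((\<lambda>z. weighted_sum (fst z) a - snd z) \<longlongrightarrow> weighted_sum q0 a - y0) (at (q0, y0))" for a
  proof -
    have "isCont (\<lambda>z. weighted_sum (fst z) a - snd z) (q0, y0)"
      unfolding weighted_sum_def by (intro continuous_intros isCont_vec_nth)
    then show ?thesis unfolding isCont_def by simp
  qed
  have dom: "\<forall>\<^sub>F z in at (q0, y0). fst z \<noteq> 0 \<and> 0 < snd z"
  proof -
    have "open ((- {0}) \<times> {0<..} :: ((complex^'n) \<times> real) set)" by (intro open_Times) auto
    then show ?thesis
      unfolding eventually_at_topological using q0 y0 by (intro exI[of _ "(- {0}) \<times> {0<..}"]) auto
  qed
  have "((\<lambda>z. level_root (fst z) (snd z)) \<longlongrightarrow> level_root q0 y0) (at (q0, y0))"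
  proof (rule order_tendstoI)
    fix a assume a: "a < level_root q0 y0"
    show "\<forall>\<^sub>F z in at (q0, y0). a < level_root (fst z) (snd z)"
    proof (cases "0 < a")
      case True
      with a have "0 < weighted_sum q0 a - y0" using less_level_root_iff[OF q0 y0] by simp
      from dom order_tendstoD(1)[OF lim this] show ?thesis
        by eventually_elim (use True less_level_root_iff in auto)
    next
      case False
      from dom show ?thesis by eventually_elim (use False level_root_pos in force)
    qed
  next
    fix a assume a: "level_root q0 y0 < a"
    then have "0 < a" using level_root_pos[OF q0 y0] by simp
    with a have "weighted_sum q0 a - y0 < 0" using level_root_less_iff[OF q0 y0] by simp
    from dom order_tendstoD(2)[OF lim this] show "\<forall>\<^sub>F z in at (q0, y0). level_root (fst z) (snd z) < a"
      by eventually_elim (use \<open>0 < a\<close> level_root_less_iff in auto)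
  qed
  then show ?thesis unfolding isCont_def by simp
qed

text \<open>By the implicit function theorem, \<open>d phi = phi_num / phi_den\<close>, where \<open>phi_num\<close> and
  \<open>-phi_den\<close> are the partial derivatives of \<open>weighted_sum\<close> at \<open>(q, phi q)\<close>.\<close>

definition phi_num :: "complex^'n \<Rightarrow> complex^'n \<Rightarrow> real" where
  "phi_num q v = (\<Sum>j\<in>UNIV. 2 * (q $ j \<bullet> v $ j) * phi q powr (- \<alpha> j))"

definition phi_den :: "complex^'n \<Rightarrow> real" where
  "phi_den q = (\<Sum>j\<in>UNIV. \<alpha> j * (cmod (q $ j))\<^sup>2 * phi q powr (- \<alpha> j - 1))"

lemma bounded_linear_phi_num: "bounded_linear (phi_num q)"
  unfolding phi_num_def by (intro bounded_linear_sum bounded_linear_intros)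

lemma phi_den_pos:
  assumes q: "q \<noteq> 0"
  shows "0 < phi_den q"
proof -
  obtain j where j: "q $ j \<noteq> 0" using vec_nonzero_component[OF q] by blast
  show ?thesis unfolding phi_den_def
  proof (rule sum_pos2[where i=j])
    show "0 < \<alpha> j * (cmod (q $ j))\<^sup>2 * phi q powr (- \<alpha> j - 1)"
      using weights_pos phi_pos[OF q] j by simp
  qed (use phi_pos[OF q] in \<open>auto intro!: mult_nonneg_nonneg less_imp_le[OF weights_pos]\<close>)
qed

lemma has_derivative_weighted_sum:
  assumes q: "q \<noteq> 0"
  shows "((\<lambda>z. weighted_sum (fst z) (snd z)) has_derivative
      (\<lambda>h. phi_num q (fst h) - snd h * phi_den q)) (at (q, phi q))"
proof -
  let ?s = "phi q"
  have comp: "((\<lambda>z. fst z $ j) has_derivative (\<lambda>h. fst h $ j)) (at (q, ?s))" for j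
    by (intro bounded_linear_imp_has_derivative bounded_linear_compose[OF bounded_linear_vec_nth]
        bounded_linear_fst)
  have pow: "((\<lambda>z. snd z powr (- \<alpha> j)) has_derivative (\<lambda>h. - \<alpha> j * snd h * ?s powr (- \<alpha> j - 1)))
      (at (q, ?s))" for j
    by (rule has_derivative_powr_const[OF has_derivative_snd[OF has_derivative_ident], of "(q, ?s)",
          unfolded snd_conv]) (rule phi_pos[OF q])
  have "((\<lambda>z. weighted_sum (fst z) (snd z)) has_derivative
      (\<lambda>h. \<Sum>j\<in>UNIV. (fst (q, ?s) $ j \<bullet> fst (q, ?s) $ j) * (- \<alpha> j * snd h * ?s powr (- \<alpha> j - 1))
        + (fst (q, ?s) $ j \<bullet> fst h $ j + fst h $ j \<bullet> fst (q, ?s) $ j) * snd (q, ?s) powr (- \<alpha> j)))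
      (at (q, ?s))"
    unfolding weighted_sum_def power2_norm_eq_inner
    by (intro has_derivative_sum has_derivative_mult has_derivative_inner comp pow)
  moreover have "(\<lambda>h. \<Sum>j\<in>UNIV. (fst (q, ?s) $ j \<bullet> fst (q, ?s) $ j) * (- \<alpha> j * snd h * ?s powr (- \<alpha> j - 1))
        + (fst (q, ?s) $ j \<bullet> fst h $ j + fst h $ j \<bullet> fst (q, ?s) $ j) * snd (q, ?s) powr (- \<alpha> j))
      = (\<lambda>h. phi_num q (fst h) - snd h * phi_den q)"
  proof (intro ext)
    fix h :: "(complex^'n) \<times> real"
    have "fst h $ j \<bullet> q $ j = q $ j \<bullet> fst h $ j" for j by (rule inner_commute)
    then show "(\<Sum>j\<in>UNIV. (fst (q, ?s) $ j \<bullet> fst (q, ?s) $ j) * (- \<alpha> j * snd h * ?s powr (- \<alpha> j - 1))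
        + (fst (q, ?s) $ j \<bullet> fst h $ j + fst h $ j \<bullet> fst (q, ?s) $ j) * snd (q, ?s) powr (- \<alpha> j))
      = phi_num q (fst h) - snd h * phi_den q"
      unfolding phi_num_def phi_den_def sum_distrib_left sum_subtractf[symmetric]
      by (intro sum.cong refl) (simp add: power2_norm_eq_inner algebra_simps)
  qed
  ultimately show ?thesis by (rule has_derivative_eq_rhs)
qed

definition dphi :: "complex^'n \<Rightarrow> complex^'n \<Rightarrow> real" where
  "dphi q v = phi_num q v / phi_den q"

lemma has_derivative_phi:
  assumes q: "q \<noteq> 0"
  shows "(phi has_derivative dphi q) (at q)"
proof -
  define T where "T = ((- {0}) \<times> {0<..} :: ((complex^'n) \<times> real) set)"
  define G where "G z = (fst z, weighted_sum (fst z) (snd z))" for z :: "(complex^'n) \<times> real"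
  define H where "H z = (fst z, level_root (fst z) (snd z))" for z :: "(complex^'n) \<times> real"
  define G' where "G' h = (fst h, phi_num q (fst h) - snd h * phi_den q)" for h :: "(complex^'n) \<times> real"
  define H' where "H' h = (fst h, (phi_num q (fst h) - snd h) / phi_den q)" for h :: "(complex^'n) \<times> real"
  have H1: "H (q, 1) = (q, phi q)" unfolding H_def phi_def by simp
  have "(G has_derivative G') (at (H (q, 1)))"
    unfolding H1 G_def[abs_def] G'_def[abs_def]
    by (rule has_derivative_Pair[OF has_derivative_fst[OF has_derivative_ident]
          has_derivative_weighted_sum[OF q]])
  moreover have "bounded_linear H'"
    unfolding H'_def[abs_def]
    by (rule bounded_linear_Pair[OF bounded_linear_fst bounded_linear_compose[OF bounded_linear_divide
          bounded_linear_sub[OF bounded_linear_compose[OF bounded_linear_phi_num bounded_linear_fst]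
          bounded_linear_snd]]])
  moreover have "H' \<circ> G' = id"
    unfolding H'_def G'_def using phi_den_pos[OF q] by (auto simp: fun_eq_iff)
  moreover have "continuous (at (q, 1)) H"
    unfolding H_def using isCont_level_root[OF q] by (intro continuous_Pair continuous_fst continuous_ident) simp_all
  moreover have "open T" unfolding T_def by (intro open_Times) auto
  moreover have "G (H z) = z" if "z \<in> T" for z
    using that weighted_sum_level_root unfolding T_def G_def H_def by (auto simp: mem_Times_iff)
  ultimately have "(H has_derivative H') (at (q, 1))"
    using has_derivative_inverse_basic[of G G' H "(q, 1)" H' T] q unfolding T_def by simp
  from has_derivative_snd[OF has_derivative_compose[OF has_derivative_Pair[OF has_derivative_ident
      has_derivative_const[of 1]] this]]
  show ?thesis unfolding H_def H'_def phi_def dphi_def[abs_def] by (simp add: o_def)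
qed

lemma dd_phi1:
  assumes "q \<noteq> 0"
  shows "dd phi [v] q = dphi q v"
  using fun_cong[OF frechet_derivative_at[OF has_derivative_phi[OF assms]], of v] by simp

lemma smooth_gen_phi_powr: "(\<lambda>q. phi q powr c) \<in> smooth_gen punctured {phi}"
  by (intro smooth_gen.powr smooth_gen.gen) (auto simp: phi_pos)

lemma smooth_gen_norm_vec_nth: "(\<lambda>q::complex^'n. (cmod (q $ j))\<^sup>2) \<in> smooth_gen U B"
proof (rule smooth_gen.cong)
  show "(\<lambda>q::complex^'n. Re (q $ j) * Re (q $ j) + Im (q $ j) * Im (q $ j)) \<in> smooth_gen U B"
    by (intro smooth_gen.add smooth_gen.mult smooth_gen.linear
        bounded_linear_compose[OF bounded_linear_Re bounded_linear_vec_nth]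
        bounded_linear_compose[OF bounded_linear_Im bounded_linear_vec_nth])
qed (simp add: cmod_power2 flip: power2_eq_square)

lemma smooth_gen_inner_vec_nth: "(\<lambda>q::complex^'n. q $ j \<bullet> v $ j) \<in> smooth_gen U B"
  by (rule smooth_gen.linear[OF bounded_linear_inner_left_comp[OF bounded_linear_vec_nth]])

lemma smooth_gen_phi_num: "(\<lambda>q. phi_num q v) \<in> smooth_gen punctured {phi}"
  unfolding phi_num_def
  by (intro smooth_gen_sum smooth_gen.mult smooth_gen.const smooth_gen_inner_vec_nth
      smooth_gen_phi_powr) simp

lemma smooth_gen_phi_den: "phi_den \<in> smooth_gen punctured {phi}"
  unfolding phi_den_def[abs_def]
  by (intro smooth_gen_sum smooth_gen.mult smooth_gen.const smooth_gen_norm_vec_nth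
      smooth_gen_phi_powr) simp

lemma derivs_in_phi: "derivs_in punctured {phi} phi"
  by (rule derivs_inI[OF has_derivative_phi])
    (auto simp: dphi_def intro!: smooth_gen_divide smooth_gen_phi_num smooth_gen_phi_den phi_den_pos)

lemma smooth_gen_phi_smooth_on:
  assumes "f \<in> smooth_gen punctured {phi}"
  shows "smooth_on punctured f"
  using smooth_gen_smooth_on[OF open_punctured _ assms] derivs_in_phi by blast

lemma smooth_on_phi: "smooth_on punctured phi"
  by (rule smooth_gen_phi_smooth_on[OF smooth_gen.gen]) simp

section \<open>The Levi form of \<open>phi\<close>\<close>

definition num_dq :: "complex^'n \<Rightarrow> complex^'n \<Rightarrow> complex^'n \<Rightarrow> real" where
  "num_dq q v w = (\<Sum>j\<in>UNIV. 2 * (v $ j \<bullet> w $ j) * phi q powr (- \<alpha> j))"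

definition den_dq :: "complex^'n \<Rightarrow> complex^'n \<Rightarrow> real" where
  "den_dq q v = (\<Sum>j\<in>UNIV. 2 * \<alpha> j * (q $ j \<bullet> v $ j) * phi q powr (- \<alpha> j - 1))"

definition den_dphi :: "complex^'n \<Rightarrow> real" where
  "den_dphi q = (\<Sum>j\<in>UNIV. \<alpha> j * (\<alpha> j + 1) * (cmod (q $ j))\<^sup>2 * phi q powr (- \<alpha> j - 2))"

text \<open>With \<open>phi\<close> frozen, \<open>num_dq\<close> and \<open>den_dq\<close> are the derivatives of \<open>phi_num\<close> and \<open>phi_den\<close> in
  \<open>q\<close>; the derivatives in the \<open>phi\<close> slot are \<open>-den_dq\<close> and \<open>-den_dphi\<close>.\<close>

lemma has_derivative_phi_powr:
  "p \<noteq> 0 \<Longrightarrow> ((\<lambda>q. phi q powr c) has_derivative (\<lambda>v. c * dphi p v * phi p powr (c - 1))) (at p)"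
  by (rule has_derivative_powr_const[OF has_derivative_phi phi_pos])

lemma has_derivative_phi_num:
  assumes p: "p \<noteq> 0"
  shows "((\<lambda>q. phi_num q w) has_derivative (\<lambda>v. num_dq p v w - den_dq p w * dphi p v)) (at p)"
proof -
  have "((\<lambda>q. phi_num q w) has_derivative
     (\<lambda>v. \<Sum>j\<in>UNIV. 2 * (p $ j \<bullet> w $ j) * (- \<alpha> j * dphi p v * phi p powr (- \<alpha> j - 1))
            + 2 * (v $ j \<bullet> w $ j) * phi p powr (- \<alpha> j))) (at p)"
    unfolding phi_num_def
    by (intro has_derivative_sum has_derivative_mult has_derivative_scaled_inner_vec_nth
        has_derivative_phi_powr[OF p])
  moreover have "(\<lambda>v. \<Sum>j\<in>UNIV. 2 * (p $ j \<bullet> w $ j) * (- \<alpha> j * dphi p v * phi p powr (- \<alpha> j - 1))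
            + 2 * (v $ j \<bullet> w $ j) * phi p powr (- \<alpha> j)) = (\<lambda>v. num_dq p v w - den_dq p w * dphi p v)"
    unfolding num_dq_def den_dq_def sum_distrib_right sum_subtractf[symmetric]
    by (intro ext sum.cong refl) (simp add: algebra_simps)
  ultimately show ?thesis by (rule has_derivative_eq_rhs)
qed

lemma has_derivative_phi_den:
  assumes p: "p \<noteq> 0"
  shows "(phi_den has_derivative (\<lambda>v. den_dq p v - den_dphi p * dphi p v)) (at p)"
proof -
  have "(phi_den has_derivative
     (\<lambda>v. \<Sum>j\<in>UNIV. \<alpha> j * (cmod (p $ j))\<^sup>2 * ((- \<alpha> j - 1) * dphi p v * phi p powr (- \<alpha> j - 1 - 1))
            + \<alpha> j * (2 * (p $ j \<bullet> v $ j)) * phi p powr (- \<alpha> j - 1))) (at p)"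
    unfolding phi_den_def[abs_def]
    by (intro has_derivative_sum has_derivative_mult has_derivative_scaled_norm_vec_nth
        has_derivative_phi_powr[OF p])
  moreover have "(\<lambda>v. \<Sum>j\<in>UNIV. \<alpha> j * (cmod (p $ j))\<^sup>2 * ((- \<alpha> j - 1) * dphi p v * phi p powr (- \<alpha> j - 1 - 1))
            + \<alpha> j * (2 * (p $ j \<bullet> v $ j)) * phi p powr (- \<alpha> j - 1))
      = (\<lambda>v. den_dq p v - den_dphi p * dphi p v)"
  proof (intro ext)
    fix v
    have "- \<alpha> j - 1 - 1 = - \<alpha> j - 2" for j by simp
    then show "(\<Sum>j\<in>UNIV. \<alpha> j * (cmod (p $ j))\<^sup>2 * ((- \<alpha> j - 1) * dphi p v * phi p powr (- \<alpha> j - 1 - 1))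
            + \<alpha> j * (2 * (p $ j \<bullet> v $ j)) * phi p powr (- \<alpha> j - 1)) = den_dq p v - den_dphi p * dphi p v"
      unfolding den_dq_def den_dphi_def sum_distrib_right sum_subtractf[symmetric]
      by (intro sum.cong refl) (simp add: algebra_simps)
  qed
  ultimately show ?thesis by (rule has_derivative_eq_rhs)
qed

lemma phi_den_dd_phi2:
  assumes p: "p \<noteq> 0"
  shows "phi_den p * dd phi [v, w] p
    = num_dq p v w - den_dq p w * dphi p v - dphi p w * (den_dq p v - den_dphi p * dphi p v)"
proof -
  have S: "0 < phi_den p" using phi_den_pos[OF p] .
  have "dd phi [v, w] p = frechet_derivative (\<lambda>q. phi_num q w / phi_den q) (at p) v"
    using frechet_derivative_cong_open[OF open_punctured, of p "dd phi [w]" "\<lambda>q. phi_num q w / phi_den q"]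
      dd_phi1 p by (simp add: dphi_def)
  also have "\<dots> = ((num_dq p v w - den_dq p w * dphi p v) * phi_den p
      - phi_num p w * (den_dq p v - den_dphi p * dphi p v)) / (phi_den p * phi_den p)"
    using fun_cong[OF frechet_derivative_at[OF has_derivative_divide'[OF has_derivative_phi_num[OF p]
          has_derivative_phi_den[OF p]]], of v] S by simp
  finally show ?thesis using S unfolding dphi_def by (simp add: field_simps)
qed

lemma phi_den_cube_dd_phi2_diag:
  assumes p: "p \<noteq> 0"
  shows "phi_den p ^ 3 * dd phi [v, v] p = (phi_den p)\<^sup>2 * num_dq p v v
    - 2 * phi_den p * den_dq p v * phi_num p v + den_dphi p * (phi_num p v)\<^sup>2"
proof -
  have S: "0 < phi_den p" using phi_den_pos[OF p] .
  have "phi_den p ^ 3 * dd phi [v, v] p = (phi_den p)\<^sup>2 * (phi_den p * dd phi [v, v] p)"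
    by (simp add: power2_eq_square power3_eq_cube)
  also have "\<dots> = (phi_den p)\<^sup>2 * num_dq p v v
    - 2 * phi_den p * den_dq p v * phi_num p v + den_dphi p * (phi_num p v)\<^sup>2"
    unfolding phi_den_dd_phi2[OF p] dphi_def using S by (simp add: field_simps power2_eq_square)
  finally show ?thesis .
qed

lemma num_dq_Jc: "num_dq p (Jc v) (Jc w) = num_dq p v w"
  unfolding num_dq_def inner_complex_def by (simp add: add.commute)

lemma num_dq_pos:
  assumes p: "p \<noteq> 0" and v: "v \<noteq> 0"
  shows "0 < num_dq p v v"
proof -
  obtain j where "v $ j \<noteq> 0" using vec_nonzero_component[OF v] by blast
  then show ?thesis unfolding num_dq_def using phi_pos[OF p] by (intro sum_pos2[where i=j]) auto
qed

lemma den_dphi_eq: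
  assumes p: "p \<noteq> 0"
  shows "den_dphi p = phi_den p / phi p + (\<Sum>j\<in>UNIV. (\<alpha> j)\<^sup>2 * (cmod (p $ j))\<^sup>2 * phi p powr (- \<alpha> j - 2))"
proof -
  have "phi p powr (- \<alpha> j - 2) = phi p powr (- \<alpha> j - 1) / phi p" for j
  proof -
    have "phi p powr (- \<alpha> j - 2) = phi p powr ((- \<alpha> j - 1) - 1)" by (rule arg_cong[of _ _ "(powr) (phi p)"]) simp
    also have "\<dots> = phi p powr (- \<alpha> j - 1) / phi p" using phi_pos[OF p] by (simp only: powr_diff powr_one)
    finally show ?thesis .
  qed
  then have "phi_den p / phi p = (\<Sum>j\<in>UNIV. \<alpha> j * (cmod (p $ j))\<^sup>2 * phi p powr (- \<alpha> j - 2))"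
    unfolding phi_den_def sum_divide_distrib by simp
  then show ?thesis
    unfolding den_dphi_def
    by (simp only: sum.distrib[symmetric]) (intro sum.cong refl; simp add: power2_eq_square algebra_simps)
qed

lemma den_dq_Cauchy_Schwarz:
  assumes p: "p \<noteq> 0"
  shows "(den_dq p v)\<^sup>2 + (den_dq p (Jc v))\<^sup>2 \<le> (den_dphi p - phi_den p / phi p) * (2 * num_dq p v v)"
proof -
  define ph where "ph = phi p"
  have ph: "0 < ph" unfolding ph_def using phi_pos[OF p] .
  define C1 where "C1 = (\<Sum>j\<in>UNIV. (\<alpha> j * ph powr (- \<alpha> j - 1)) * (p $ j \<bullet> v $ j))"
  define C2 where "C2 = (\<Sum>j\<in>UNIV. (\<alpha> j * ph powr (- \<alpha> j - 1)) * (p $ j \<bullet> (\<i> * v $ j)))"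
  define T where "T = (\<Sum>j\<in>UNIV. ((\<alpha> j)\<^sup>2 * ph powr (- \<alpha> j - 2)) * (cmod (p $ j))\<^sup>2)"
  define W where "W = (\<Sum>j\<in>UNIV. ph powr (- \<alpha> j) * (cmod (v $ j))\<^sup>2)"
  have "C1\<^sup>2 + C2\<^sup>2 \<le> T * W"
    unfolding C1_def C2_def T_def W_def
  proof (rule Cauchy_Schwarz_pairs)
    fix j
    show "0 \<le> \<alpha> j * ph powr (- \<alpha> j - 1) \<and> 0 \<le> (\<alpha> j)\<^sup>2 * ph powr (- \<alpha> j - 2)
        \<and> 0 \<le> ph powr - \<alpha> j \<and> 0 \<le> (cmod (p $ j))\<^sup>2 \<and> 0 \<le> (cmod (v $ j))\<^sup>2"
      using weights_pos[of j] by simp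
    have "(ph powr (- \<alpha> j - 1))\<^sup>2 = ph powr (- \<alpha> j - 2) * ph powr - \<alpha> j"
      unfolding power2_eq_square powr_add[symmetric] by (simp add: algebra_simps)
    then show "(\<alpha> j * ph powr (- \<alpha> j - 1))\<^sup>2 = (\<alpha> j)\<^sup>2 * ph powr (- \<alpha> j - 2) * ph powr - \<alpha> j"
      by (simp add: power_mult_distrib)
    show "(p $ j \<bullet> v $ j)\<^sup>2 + (p $ j \<bullet> (\<i> * v $ j))\<^sup>2 = (cmod (p $ j))\<^sup>2 * (cmod (v $ j))\<^sup>2"
      by (rule inner_sq_add_inner_i_sq)
  qed
  moreover have "den_dq p v = 2 * C1" "den_dq p (Jc v) = 2 * C2"
    unfolding den_dq_def C1_def C2_def ph_def sum_distrib_left by (simp_all add: algebra_simps)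
  moreover have "num_dq p v v = 2 * W"
    unfolding num_dq_def W_def ph_def sum_distrib_left
    by (simp add: power2_norm_eq_inner[symmetric] algebra_simps)
  moreover have "den_dphi p - phi_den p / phi p = T"
    unfolding den_dphi_eq[OF p] T_def ph_def by (simp add: algebra_simps)
  ultimately show ?thesis by (simp add: power_mult_distrib)
qed

lemma levi_form_pos:
  assumes p: "p \<noteq> 0" and v: "v \<noteq> 0"
  shows "0 < dd phi [v, v] p + dd phi [Jc v, Jc v] p"
proof -
  have S: "0 < phi_den p" using phi_den_pos[OF p] .
  have "0 \<le> den_dphi p - phi_den p / phi p"
    unfolding den_dphi_eq[OF p] by (auto intro!: sum_nonneg)
  from quadratic_form_pos[OF S _ this divide_pos_pos[OF S phi_pos[OF p]] den_dq_Cauchy_Schwarz[OF p]]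
  have "0 < (phi_den p)\<^sup>2 * (2 * num_dq p v v)
      - 2 * phi_den p * (den_dq p v * phi_num p v + den_dq p (Jc v) * phi_num p (Jc v))
      + den_dphi p * ((phi_num p v)\<^sup>2 + (phi_num p (Jc v))\<^sup>2)"
    using num_dq_pos[OF p v] by simp
  also have "\<dots> = phi_den p ^ 3 * (dd phi [v, v] p + dd phi [Jc v, Jc v] p)"
    unfolding distrib_left phi_den_cube_dd_phi2_diag[OF p] num_dq_Jc by (simp add: algebra_simps)
  finally show ?thesis using S by (simp add: zero_less_mult_iff del: dd.simps)
qed

section \<open>Homogeneity of \<open>phi\<close> and the Euler identities\<close>

lemma phi_diag:
  assumes q: "q \<noteq> 0" and r: "0 < r" and a: "\<And>j. cmod (a j) = r powr \<alpha> j"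
  shows "phi (diag a q) = r\<^sup>2 * phi q"
proof -
  have "a j \<noteq> 0" for j using a[of j] r by auto
  from diag_nonzero[OF this q] have nz: "diag a q \<noteq> 0" .
  have "weighted_sum (diag a q) (r\<^sup>2 * phi q) = weighted_sum q (phi q)"
    unfolding weighted_sum_def
  proof (intro sum.cong refl)
    fix j
    have "r powr \<alpha> j * r powr (- \<alpha> j) = 1" using r by (simp add: powr_add[symmetric])
    moreover have "(r powr \<alpha> j)\<^sup>2 * (r\<^sup>2) powr (- \<alpha> j) = (r powr \<alpha> j * r powr (- \<alpha> j))\<^sup>2"
      unfolding power2_eq_square powr_mult by (simp only: mult_ac)
    moreover have "(cmod (diag a q $ j))\<^sup>2 * (r\<^sup>2 * phi q) powr - \<alpha> j
        = ((r powr \<alpha> j)\<^sup>2 * (r\<^sup>2) powr (- \<alpha> j)) * ((cmod (q $ j))\<^sup>2 * phi q powr - \<alpha> j)"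
      unfolding diag_def by (simp add: norm_mult power_mult_distrib powr_mult a mult_ac)
    ultimately show "(cmod (diag a q $ j))\<^sup>2 * (r\<^sup>2 * phi q) powr - \<alpha> j = (cmod (q $ j))\<^sup>2 * phi q powr - \<alpha> j"
      by simp
  qed
  then show ?thesis
    unfolding phi_def using level_root_eqI[OF nz] weighted_sum_phi[OF q] phi_pos[OF q] r
    by (simp add: phi_def)
qed

definition euler :: "complex^'n \<Rightarrow> complex^'n" where
  "euler = diag (\<lambda>j. of_real (\<alpha> j))"

lemma euler_Jc: "euler (Jc v) = Jc (euler v)"
  unfolding euler_def by (rule Jc_diag[symmetric])

lemma phi_euler_flow:
  assumes q: "q \<noteq> 0"
  shows "phi (diag_flow (\<lambda>j. of_real (\<alpha> j)) t q) = exp (t * 2) * phi q"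
proof -
  have "phi (diag_flow (\<lambda>j. of_real (\<alpha> j)) t q) = (exp t)\<^sup>2 * phi q"
    unfolding diag_flow_def by (rule phi_diag[OF q]) (simp_all add: norm_exp_eq_Re powr_def mult.commute)
  then show ?thesis by (metis exp_double mult.commute)
qed

lemma phi_rotation_flow:
  assumes q: "q \<noteq> 0"
  shows "phi (diag_flow (\<lambda>j. \<i> * of_real (\<alpha> j)) t q) = exp (t * 0) * phi q"
proof -
  have "phi (diag_flow (\<lambda>j. \<i> * of_real (\<alpha> j)) t q) = 1\<^sup>2 * phi q"
    unfolding diag_flow_def by (rule phi_diag[OF q]) (simp_all add: norm_exp_eq_Re)
  then show ?thesis by simp
qed

lemma phi_dd_swap: "p \<noteq> 0 \<Longrightarrow> dd phi [X, Y] p = dd phi [Y, X] p"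
  by (rule dd_swap[OF smooth_on_phi open_punctured]) simp

lemma phi_dd3_swap12: "p \<noteq> 0 \<Longrightarrow> dd phi [X, Y, Z] p = dd phi [Y, X, Z] p"
  by (rule dd3_swap12[OF smooth_on_phi open_punctured]) simp

lemma phi_dd3_swap23: "p \<noteq> 0 \<Longrightarrow> dd phi [X, Y, Z] p = dd phi [X, Z, Y] p"
  by (rule dd3_swap23[OF smooth_on_phi open_punctured]) simp

lemma linear_dd_phi: "p \<noteq> 0 \<Longrightarrow> linear (\<lambda>X. dd phi (X # vs) p)"
  by (rule linear_dd_Cons[OF smooth_on_phi]) simp

lemma bilinear_dd2_phi:
  assumes "p \<noteq> 0"
  shows "bilinear (\<lambda>X Y. dd phi [X, Y] p)"
  by (rule bilinear_dd2[OF smooth_on_phi open_punctured]) (simp add: assms)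

lemma dd3_phi_minus3:
  assumes p: "p \<noteq> 0"
  shows "dd phi [X, Y, - Z] p = - dd phi [X, Y, Z] p"
proof -
  have "dd phi [X, Y, - Z] p = dd phi [- Z, X, Y] p"
    using phi_dd3_swap23[OF p, of X Y "- Z"] phi_dd3_swap12[OF p, of X "- Z" Y] by simp
  also have "\<dots> = - dd phi [Z, X, Y] p"
    using linear_neg[OF linear_dd_phi[OF p, of "[X, Y]"], of Z] by (simp del: dd.simps)
  also have "dd phi [Z, X, Y] p = dd phi [X, Y, Z] p"
    using phi_dd3_swap23[OF p, of X Y Z] phi_dd3_swap12[OF p, of X Z Y] by simp
  finally show ?thesis .
qed

lemma dd_phi_euler: "p \<noteq> 0 \<Longrightarrow> dd phi [euler p] p = 2 * phi p"
  unfolding euler_def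
  by (rule dd0_diag_flow_euler[OF smooth_on_phi open_punctured])
    (simp_all add: diag_flow_nonzero phi_euler_flow)

lemma dd_phi_euler1: "p \<noteq> 0 \<Longrightarrow> dd phi [euler p, Y] p = 2 * dd phi [Y] p - dd phi [euler Y] p"
  unfolding euler_def
  by (rule dd1_diag_flow_euler[OF smooth_on_phi open_punctured])
    (simp_all add: diag_flow_nonzero phi_euler_flow)

lemma dd_phi_euler2:
  assumes p: "p \<noteq> 0"
  shows "dd phi [euler p, X, Y] p = 2 * dd phi [X, Y] p - dd phi [euler X, Y] p - dd phi [X, euler Y] p"
  unfolding euler_def
  by (rule dd2_diag_flow_euler[OF smooth_on_phi open_punctured])
    (simp_all add: diag_flow_nonzero phi_euler_flow p)

lemma dd_phi_rotation1: "p \<noteq> 0 \<Longrightarrow> dd phi [Jc (euler p), Y] p = - dd phi [Jc (euler Y)] p"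
  using dd1_diag_flow_euler[OF smooth_on_phi open_punctured, of p "\<lambda>j. \<i> * of_real (\<alpha> j)" 0 Y]
  by (simp add: diag_flow_nonzero phi_rotation_flow diag_i_times euler_def del: dd.simps)

lemma dd_phi_rotation2:
  assumes p: "p \<noteq> 0"
  shows "dd phi [Jc (euler p), X, Y] p = - dd phi [Jc (euler X), Y] p - dd phi [X, Jc (euler Y)] p"
  using dd2_diag_flow_euler[OF smooth_on_phi open_punctured, of p "\<lambda>j. \<i> * of_real (\<alpha> j)" 0]
  by (simp add: diag_flow_nonzero phi_rotation_flow diag_i_times euler_def p del: dd.simps)

text \<open>Divided by \<open>phi\<close>, this says \<open>g(a, euler p) = -2 \<theta>(a)\<close> for the metric \<open>g\<close> and Lee form \<open>\<theta>\<close>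
  defined below: the Lee field is \<open>-euler/2\<close>.\<close>

lemma dd_phi_pair_euler:
  assumes p: "p \<noteq> 0"
  shows "dd phi [a, euler p] p + dd phi [Jc a, Jc (euler p)] p = 2 * dd phi [a] p"
proof -
  have "dd phi [a, euler p] p = 2 * dd phi [a] p - dd phi [euler a] p"
    using phi_dd_swap[OF p, of a "euler p"] dd_phi_euler1[OF p, of a] by linarith
  moreover have "dd phi [Jc a, Jc (euler p)] p = - dd phi [Jc (euler (Jc a))] p"
    using phi_dd_swap[OF p, of "Jc a" "Jc (euler p)"] dd_phi_rotation1[OF p, of "Jc a"] by linarith
  moreover have "dd phi [Jc (euler (Jc a))] p = - dd phi [euler a] p"
    using linear_neg[OF linear_dd_phi[OF p, of "[]"], of "euler a"] by (simp add: euler_Jc del: dd.simps)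
  ultimately show ?thesis by linarith
qed

lemma dd3_phi_pair_euler:
  assumes p: "p \<noteq> 0"
  shows "dd phi [X, a, euler p] p + dd phi [X, Jc a, Jc (euler p)] p
    = 2 * dd phi [X, a] p - dd phi [euler X, a] p - dd phi [Jc (euler X), Jc a] p"
proof -
  have cyc: "dd phi [x, y, z] p = dd phi [z, x, y] p" for x y z
    using phi_dd3_swap23[OF p, of x y z] phi_dd3_swap12[OF p, of x z y] by simp
  have "dd phi [X, a, euler p] p = 2 * dd phi [X, a] p - dd phi [euler X, a] p - dd phi [X, euler a] p"
    using cyc[of X a "euler p"] dd_phi_euler2[OF p, of X a] by linarith
  moreover have "dd phi [X, Jc a, Jc (euler p)] p
      = - dd phi [Jc (euler X), Jc a] p - dd phi [X, Jc (euler (Jc a))] p"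
    using cyc[of X "Jc a" "Jc (euler p)"] dd_phi_rotation2[OF p, of X "Jc a"] by linarith
  moreover have "dd phi [X, Jc (euler (Jc a))] p = - dd phi [X, euler a] p"
    using bilinear_rneg[OF bilinear_dd2_phi[OF p]] by (simp add: euler_Jc del: dd.simps)
  ultimately show ?thesis by linarith
qed

section \<open>The metric and its Lee form\<close>

definition hopf_metric :: "complex^'n \<Rightarrow> complex^'n \<Rightarrow> complex^'n \<Rightarrow> real" where
  "hopf_metric p v w = (dd phi [v, w] p + dd phi [Jc v, Jc w] p) / phi p"

definition lee_form :: "complex^'n \<Rightarrow> complex^'n \<Rightarrow> real" where
  "lee_form p v = - dd phi [v] p / phi p"

lemma bilinear_hopf_metric:
  assumes p: "p \<noteq> 0"
  shows "bilinear (hopf_metric p)"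
  unfolding bilinear_def hopf_metric_def
proof (intro allI conjI)
  note B = bilinear_dd2_phi[OF p] and J = linear_Jc
  fix x
  show "linear (\<lambda>y. (dd phi [x, y] p + dd phi [Jc x, Jc y] p) / phi p)"
    by (rule linearI) (simp_all add: bilinear_radd[OF B] bilinear_rmul[OF B] linear_add[OF J]
        linear_scale[OF J] add_divide_distrib algebra_simps del: dd.simps)
  fix y
  show "linear (\<lambda>x. (dd phi [x, y] p + dd phi [Jc x, Jc y] p) / phi p)"
    by (rule linearI) (simp_all add: bilinear_ladd[OF B] bilinear_lmul[OF B] linear_add[OF J]
        linear_scale[OF J] add_divide_distrib algebra_simps del: dd.simps)
qed

lemma hopf_metric_sym:
  assumes p: "p \<noteq> 0"
  shows "hopf_metric p v w = hopf_metric p w v"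
  unfolding hopf_metric_def phi_dd_swap[OF p, of v w] phi_dd_swap[OF p, of "Jc v" "Jc w"] ..

lemma hopf_metric_pos: "p \<noteq> 0 \<Longrightarrow> v \<noteq> 0 \<Longrightarrow> 0 < hopf_metric p v v"
  unfolding hopf_metric_def using levi_form_pos phi_pos by simp

lemma hopf_metric_Jc:
  assumes p: "p \<noteq> 0"
  shows "hopf_metric p (Jc v) (Jc w) = hopf_metric p v w"
  unfolding hopf_metric_def
  using bilinear_lneg[OF bilinear_dd2_phi[OF p]] bilinear_rneg[OF bilinear_dd2_phi[OF p]]
  by (simp add: add.commute del: dd.simps)

lemma linear_lee_form:
  assumes p: "p \<noteq> 0"
  shows "linear (lee_form p)"
proof -
  note L = linear_dd_phi[OF p, of "[]"]
  show ?thesis unfolding lee_form_def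
    by (rule linearI) (simp_all add: linear_add[OF L] linear_scale[OF L] add_divide_distrib
        diff_divide_distrib del: dd.simps)
qed

lemma smooth_gen_dd_phi: "dd phi vs \<in> smooth_gen punctured {phi}"
  by (rule smooth_gen_dd[OF open_punctured _ smooth_gen.gen]) (simp_all add: derivs_in_phi)

lemma smooth_on_hopf_metric: "smooth_on punctured (\<lambda>p. hopf_metric p v w)"
  unfolding hopf_metric_def
  by (rule smooth_gen_phi_smooth_on[OF smooth_gen_divide[OF smooth_gen.add[OF smooth_gen_dd_phi
        smooth_gen_dd_phi] smooth_gen.gen]]) (simp_all add: phi_pos)

lemma smooth_on_lee_form: "smooth_on punctured (\<lambda>p. lee_form p v)"
proof -
  have "(\<lambda>p. - dd phi [v] p) \<in> smooth_gen punctured {phi}"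
    by (rule smooth_gen.cong[OF smooth_gen.mult[OF smooth_gen.const smooth_gen_dd_phi[of "[v]"], of "- 1"]]) simp
  then show ?thesis
    unfolding lee_form_def
    by (rule smooth_gen_phi_smooth_on[OF smooth_gen_divide[OF _ smooth_gen.gen]]) (simp_all add: phi_pos)
qed

lemma dd_phi_diag_scale:
  assumes a: "\<And>j. a j \<noteq> 0" and hom: "\<And>q. q \<noteq> 0 \<Longrightarrow> phi (diag a q) = c * phi q" and p: "p \<noteq> 0"
  shows "dd phi (map (diag a) vs) (diag a p) = c * dd phi vs p"
  by (rule dd_map_linear[OF smooth_on_phi open_punctured bounded_linear_diag])
    (simp_all add: diag_nonzero a hom p)

lemma hopf_metric_diag_invariant:
  assumes a: "\<And>j. a j \<noteq> 0" and hom: "\<And>q. q \<noteq> 0 \<Longrightarrow> phi (diag a q) = c * phi q" and p: "p \<noteq> 0"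
  shows "hopf_metric (diag a p) (diag a v) (diag a w) = hopf_metric p v w"
proof -
  have "diag a p \<noteq> 0" using a p by (rule diag_nonzero)
  then have "c \<noteq> 0" using hom[OF p] phi_pos[OF p] phi_pos by force
  then show ?thesis
    unfolding hopf_metric_def Jc_diag
    using dd_phi_diag_scale[OF a hom p, of "[v, w]"] dd_phi_diag_scale[OF a hom p, of "[Jc v, Jc w]"] hom[OF p]
    by (simp add: distrib_left[symmetric] del: dd.simps)
qed

lemma lee_form_diag_invariant:
  assumes a: "\<And>j. a j \<noteq> 0" and hom: "\<And>q. q \<noteq> 0 \<Longrightarrow> phi (diag a q) = c * phi q" and p: "p \<noteq> 0"
  shows "lee_form (diag a p) (diag a v) = lee_form p v"
proof -
  have "diag a p \<noteq> 0" using a p by (rule diag_nonzero)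
  then have "c \<noteq> 0" using hom[OF p] phi_pos[OF p] phi_pos by force
  then show ?thesis
    unfolding lee_form_def using dd_phi_diag_scale[OF a hom p, of "[v]"] hom[OF p] by (simp del: dd.simps)
qed

lemma D_div_phi:
  assumes p: "p \<noteq> 0" and F: "(F has_derivative F') (at p)"
  shows "D (\<lambda>q. F q / phi q) p X = (F' X * phi p - F p * dd phi [X] p) / (phi p * phi p)"
proof -
  have "(phi has_derivative (\<lambda>X. dd phi [X] p)) (at p)"
    using smooth_on_has_derivative_dd[OF smooth_on_phi, of p "[]"] p by simp
  from has_derivative_divide'[OF F this] phi_pos[OF p]
  have "((\<lambda>q. F q / phi q) has_derivative (\<lambda>h. (F' h * phi p - F p * dd phi [h] p) / (phi p * phi p))) (at p)"
    by simp
  from fun_cong[OF frechet_derivative_at[OF this], of X] show ?thesis unfolding D_def by simp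
qed

lemma D_hopf_metric:
  assumes p: "p \<noteq> 0"
  shows "D (\<lambda>q. hopf_metric q a b) p X = ((dd phi [X, a, b] p + dd phi [X, Jc a, Jc b] p) * phi p
     - (dd phi [a, b] p + dd phi [Jc a, Jc b] p) * dd phi [X] p) / (phi p * phi p)"
proof -
  have "p \<in> punctured" using p by simp
  note d = smooth_on_has_derivative_dd[OF smooth_on_phi this]
  show ?thesis unfolding hopf_metric_def by (rule D_div_phi[OF p has_derivative_add[OF d d]])
qed

lemma D_lee_form:
  assumes p: "p \<noteq> 0"
  shows "D (\<lambda>q. lee_form q a) p X
    = (- dd phi [X, a] p * phi p + dd phi [a] p * dd phi [X] p) / (phi p * phi p)"
proof -
  have "p \<in> punctured" using p by simp
  from D_div_phi[OF p has_derivative_minus[OF smooth_on_has_derivative_dd[OF smooth_on_phi this, of "[a]"]], of X]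
  show ?thesis unfolding lee_form_def by (simp add: algebra_simps del: dd.simps)
qed

lemma closed_form_lee_form: "closed_form lee_form"
  unfolding closed_form_def
proof (intro ballI allI)
  fix p :: "complex^'n" and X Y assume "p \<in> punctured"
  then have p: "p \<noteq> 0" by simp
  show "D (\<lambda>q. lee_form q Y) p X - D (\<lambda>q. lee_form q X) p Y = 0"
    unfolding D_lee_form[OF p] using phi_dd_swap[OF p, of X Y] by (simp add: algebra_simps del: dd.simps)
qed

lemma fund_form_hopf_metric:
  assumes p: "p \<noteq> 0"
  shows "fund_form hopf_metric p a b = (dd phi [a, Jc b] p - dd phi [Jc a, b] p) / phi p"
  unfolding fund_form_def hopf_metric_def using bilinear_rneg[OF bilinear_dd2_phi[OF p]]
  by (simp del: dd.simps)

lemma D_fund_form_hopf_metric: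
  assumes p: "p \<noteq> 0"
  shows "D (\<lambda>q. fund_form hopf_metric q a b) p X =
    ((dd phi [X, a, Jc b] p - dd phi [X, Jc a, b] p) * phi p
      - (dd phi [a, Jc b] p - dd phi [Jc a, b] p) * dd phi [X] p) / (phi p * phi p)"
  unfolding fund_form_def D_hopf_metric[OF p] Jc_Jc
  using bilinear_rneg[OF bilinear_dd2_phi[OF p]] dd3_phi_minus3[OF p] by (simp del: dd.simps)

lemma lck_equation_hopf_metric: "lck_equation hopf_metric lee_form"
  unfolding lck_equation_def
proof (intro ballI allI)
  fix p :: "complex^'n" and X Y Z assume "p \<in> punctured"
  then have p: "p \<noteq> 0" by simp
  define f where "f = phi p"
  have f: "0 < f" unfolding f_def using phi_pos[OF p] .
  text \<open>The third derivatives of \<open>phi\<close> cancel in \<open>d \<omega>\<close> by symmetry, leaving \<open>d (1 / phi) \<and> phi \<omega>\<close>.\<close>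
  define t1 where "t1 = dd phi [X, Y, Jc Z] p"
  define t2 where "t2 = dd phi [X, Jc Y, Z] p"
  define t3 where "t3 = dd phi [Y, Jc X, Z] p"
  define b1 where "b1 = dd phi [Y, Jc Z] p - dd phi [Jc Y, Z] p"
  define b2 where "b2 = dd phi [X, Jc Z] p - dd phi [Jc X, Z] p"
  define b3 where "b3 = dd phi [X, Jc Y] p - dd phi [Jc X, Y] p"
  have e1: "D (\<lambda>q. fund_form hopf_metric q Y Z) p X = ((t1 - t2) * f - b1 * dd phi [X] p) / (f * f)"
    unfolding D_fund_form_hopf_metric[OF p] t1_def t2_def b1_def f_def ..
  have e2: "D (\<lambda>q. fund_form hopf_metric q X Z) p Y = ((t1 - t3) * f - b2 * dd phi [Y] p) / (f * f)"
    unfolding D_fund_form_hopf_metric[OF p] t1_def t3_def b2_def f_def phi_dd3_swap12[OF p, of Y X] ..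
  have e3: "D (\<lambda>q. fund_form hopf_metric q X Y) p Z = ((t2 - t3) * f - b3 * dd phi [Z] p) / (f * f)"
  proof -
    have "dd phi [Z, X, Jc Y] p = t2"
      unfolding t2_def using phi_dd3_swap12[OF p, of Z X] phi_dd3_swap23[OF p, of X Z] by simp
    moreover have "dd phi [Z, Jc X, Y] p = t3"
      unfolding t3_def using phi_dd3_swap12[OF p, of Z "Jc X"] phi_dd3_swap23[OF p, of "Jc X" Z]
        phi_dd3_swap12[OF p, of "Jc X" Y] by simp
    ultimately show ?thesis unfolding D_fund_form_hopf_metric[OF p] b3_def f_def by (simp only:)
  qed
  have \<omega>: "fund_form hopf_metric p Y Z = b1 / f" "fund_form hopf_metric p X Z = b2 / f"
    "fund_form hopf_metric p X Y = b3 / f"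
    unfolding fund_form_hopf_metric[OF p] b1_def b2_def b3_def f_def by simp_all
  have \<theta>: "lee_form p V = - dd phi [V] p / f" for V unfolding lee_form_def f_def ..
  show "D (\<lambda>q. fund_form hopf_metric q Y Z) p X - D (\<lambda>q. fund_form hopf_metric q X Z) p Y
      + D (\<lambda>q. fund_form hopf_metric q X Y) p Z
    = lee_form p X * fund_form hopf_metric p Y Z - lee_form p Y * fund_form hopf_metric p X Z
      + lee_form p Z * fund_form hopf_metric p X Y"
    unfolding e1 e2 e3 \<omega> \<theta> using f by (simp add: field_simps del: dd.simps)
qed

lemma dd_phi_levi_civita:
  assumes p: "p \<noteq> 0" and lc: "levi_civita_at hopf_metric p X Y N"
  shows "dd phi [N] p * phi p = dd phi [X, Y] p * phi p - dd phi [X] p * dd phi [Y] p"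
proof -
  define f where "f = phi p"
  have f: "0 < f" unfolding f_def using phi_pos[OF p] .
  define h where "h = dd phi [X, Y] p"
  define u where "u = dd phi [euler X, Y] p"
  define w where "w = dd phi [X, euler Y] p"
  define r1 where "r1 = dd phi [Jc (euler X), Jc Y] p"
  define r2 where "r2 = dd phi [Jc X, Jc (euler Y)] p"
  define jj where "jj = dd phi [Jc X, Jc Y] p"
  define x1 where "x1 = dd phi [X] p"
  define y1 where "y1 = dd phi [Y] p"
  define n1 where "n1 = dd phi [N] p"
  text \<open>Koszul's formula tested against \<open>euler p\<close> computes \<open>d phi (N)\<close>.\<close>
  have "2 * hopf_metric p N (euler p) = D (\<lambda>q. hopf_metric q Y (euler p)) p X
      + D (\<lambda>q. hopf_metric q X (euler p)) p Y - D (\<lambda>q. hopf_metric q X Y) p (euler p)"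
    using lc unfolding levi_civita_at_def by blast
  moreover have "hopf_metric p N (euler p) = 2 * n1 / f"
    unfolding hopf_metric_def dd_phi_pair_euler[OF p] n1_def f_def ..
  moreover have "D (\<lambda>q. hopf_metric q Y (euler p)) p X = ((2 * h - u - r1) * f - 2 * y1 * x1) / (f * f)"
    unfolding D_hopf_metric[OF p] dd3_phi_pair_euler[OF p] dd_phi_pair_euler[OF p]
      h_def u_def r1_def f_def x1_def y1_def ..
  moreover have "D (\<lambda>q. hopf_metric q X (euler p)) p Y = ((2 * h - w - r2) * f - 2 * x1 * y1) / (f * f)"
  proof -
    have "dd phi [Y, X] p = h" "dd phi [euler Y, X] p = w" "dd phi [Jc (euler Y), Jc X] p = r2"
      unfolding h_def w_def r2_def by (simp_all only: phi_dd_swap[OF p, of Y] phi_dd_swap[OF p, of "euler Y"]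
          phi_dd_swap[OF p, of "Jc (euler Y)"])
    then show ?thesis
      unfolding D_hopf_metric[OF p] dd3_phi_pair_euler[OF p] dd_phi_pair_euler[OF p] f_def x1_def y1_def
      by simp
  qed
  moreover have "D (\<lambda>q. hopf_metric q X Y) p (euler p)
      = ((2 * h - u - w + (2 * jj - r1 - r2)) * f - (h + jj) * (2 * f)) / (f * f)"
    unfolding D_hopf_metric[OF p] dd_phi_euler2[OF p] dd_phi_euler[OF p] euler_Jc
      h_def u_def w_def r1_def r2_def jj_def f_def ..
  ultimately have koszul: "2 * (2 * n1 / f) = ((2 * h - u - r1) * f - 2 * y1 * x1
      + ((2 * h - w - r2) * f - 2 * x1 * y1)
      - ((2 * h - u - w + (2 * jj - r1 - r2)) * f - (h + jj) * (2 * f))) / (f * f)"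
    by (simp add: add_divide_distrib diff_divide_distrib)
  have "n1 * f = 2 * (2 * n1 / f) * (f * f) / 4" using f by simp
  also have "\<dots> = ((2 * h - u - r1) * f - 2 * y1 * x1 + ((2 * h - w - r2) * f - 2 * x1 * y1)
      - ((2 * h - u - w + (2 * jj - r1 - r2)) * f - (h + jj) * (2 * f))) / 4"
    unfolding koszul using f by simp
  also have "\<dots> = h * f - x1 * y1" by (simp add: field_simps)
  finally show ?thesis unfolding n1_def f_def h_def x1_def y1_def .
qed

lemma parallel_form_lee_form: "parallel_form hopf_metric lee_form"
  unfolding parallel_form_def
proof (intro ballI allI impI)
  fix p :: "complex^'n" and X Y N
  assume "p \<in> punctured" and lc: "levi_civita_at hopf_metric p X Y N"
  then have p: "p \<noteq> 0" by simp
  have "D (\<lambda>q. lee_form q Y) p X - lee_form p N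
      = (dd phi [N] p * phi p - (dd phi [X, Y] p * phi p - dd phi [X] p * dd phi [Y] p)) / (phi p * phi p)"
    unfolding D_lee_form[OF p] unfolding lee_form_def using phi_pos[OF p] by (simp add: field_simps del: dd.simps)
  then show "D (\<lambda>q. lee_form q Y) p X - lee_form p N = 0"
    using dd_phi_levi_civita[OF p lc] by simp
qed

lemma lck_metric_parallel_lee_on_hopfI:
  assumes lam: "\<And>j. cmod (lam $ j) = exp (- \<alpha> j)"
  shows "lck_metric_parallel_lee_on_hopf lam"
proof -
  have lam0: "lam $ j \<noteq> 0" for j using lam[of j] by auto
  have hom: "phi (diag (\<lambda>j. lam $ j) q) = (exp (- 1))\<^sup>2 * phi q" if "q \<noteq> 0" for q
    by (rule phi_diag[OF that]) (simp_all add: lam powr_def)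
  have "hermitian_metric_hopf lam hopf_metric"
    unfolding hermitian_metric_hopf_def hopf_gen_diag
    using bilinear_hopf_metric hopf_metric_sym hopf_metric_pos hopf_metric_Jc
      hopf_metric_diag_invariant[OF lam0 hom] smooth_on_hopf_metric by simp
  moreover have "one_form_hopf lam lee_form"
    unfolding one_form_hopf_def hopf_gen_diag
    using linear_lee_form lee_form_diag_invariant[OF lam0 hom] smooth_on_lee_form by simp
  ultimately show ?thesis
    unfolding lck_metric_parallel_lee_on_hopf_def
    using closed_form_lee_form lck_equation_hopf_metric parallel_form_lee_form by blast
qed

end

theorem theoremB:
  fixes lam :: "complex^'n::{finite,linorder}"
  assumes "CARD('n) \<ge> 2"
    and "\<forall>i. 0 < norm (lam $ i) \<and> norm (lam $ i) < 1"
    and "\<forall>i j. i \<le> j \<longrightarrow> norm (lam $ j) \<le> norm (lam $ i)"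
  shows "lck_metric_parallel_lee_on_hopf lam"
proof -
  interpret hopf_weights "\<lambda>j. - ln (cmod (lam $ j))"
    by unfold_locales (use assms(2) in simp)
  show ?thesis
    by (rule lck_metric_parallel_lee_on_hopfI) (use assms(2) in simp)
qed

end
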